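(* Let $D$ be a rank two filtered $(\varphi,N,L/K,E)$-module with $N=0$, which is F-semisimple and not F-scalar, with standard basis $\underline\eta$, $[\varphi]_{\underline\eta}=\mathrm{diag}(\alpha\cdot\vec1,\delta\cdot\vec1)$ ($\alpha,\delta\in E^\times$, $\alpha^f\neq\delta^f$), and filtration $\mathcal F(\vec x,\vec y;\underline k)$ with $k_i\ge0$. Then $D$ is weakly admissible if and only if (i) $ef\,v_p(\alpha\delta)=\sum_{i=0}^{m-1}k_i$, (ii) $ef\,v_p(\alpha)\ge\sum_{\{i:y_i=0\}}k_i$, and (iii) $ef\,v_p(\delta)\ge\sum_{\{i:x_i=0\}}k_i$. Assume $D$ is weakly admissible. Then: $D$ is irreducible if and only if both (ii) and (iii) are strict; $D$ has exactly one nonzero proper weakly admissible sub-object if and only if exactly one of (ii), (iii) is strict (it is $D_2=E^f\eta_2$ if (ii) is strict and $D_1=E^f\eta_1$ if (iii) is strict); and both $D_1$ and $D_2$ are weakly admissible sub-objects (so $D\cong D_1\oplus D_2$) if and only if there is no index $i$ with $k_i>0$, $x_i\ne0$ and $y_i\neq0$.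
   Context: Setting: $p$ prime, $K/\mathbb{Q}_p$ finite, $L/K$ finite Galois, $G=\mathrm{Gal}(L/K)$, $L_0$ maximal unramified subfield of $L$, $f=[L_0:\mathbb{Q}_p]$, $e=[L:L_0]$, $m=ef$, $E$ finite over $\mathbb{Q}_p$ containing all embeddings of $L$; $v_p$ the valuation on $\overline{\mathbb{Q}}_p$ with $v_p(p)=1$. $L_0\otimes E\cong E^f$, $L\otimes E\cong E^m$ (via embeddings $\tau_j$ of $L_0$ and $\sigma_{fi+j}$ of $L$ extending $\tau_j$), $E^f\to E^m$ is $\vec a\mapsto\vec a^{\otimes e}$; $\varphi(x_0,\dots,x_{f-1})=(x_1,\dots,x_{f-1},x_0)$. A rank two filtered $(\varphi,N,L/K,E)$-module: free $E^f$-module $D$ of rank 2 with $\varphi$-semilinear bijection $\varphi$, nilpotent $E^f$-linear $N$ with $N\varphi=p\varphi N$, a filtration on $D_L=L\otimes_{L_0}D$, and a semilinear $E$-linear $G$-action commuting with $\varphi,N$ and preserving the filtration. Here the basis is as in the F-semisimple non-scalar case, the $G$-action is diagonal in $\underline\eta$, and the filtration is $\mathrm{Fil}^jD_L=D_L$ ($j\le0$), $\mathrm{Fil}^jD_L=E^mf_{\{i:k_i\ge j\}}(\vec x(1\otimes\eta_1)+\vec y(1\otimes\eta_2))$ ($j\ge1$), with $\vec x,\vec y\in E^m$, $(x_i,y_i)\ne(0,0)$ for all $i$, $f_J=\sum_{s\in J}e_s$. Invariants: for a filtered $E^m$-module $M$, $t_H(M)=\sum_s\sum_j j\dim_E(e_s\mathrm{Fil}^jM/e_s\mathrm{Fil}^{j+1}M)$;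 for a $\varphi$-stable $E^f$-submodule $D'$ free of rank $r$ with $[\varphi|_{D'}]=A\in GL_r(E^f)$, $t_N(D')=e\cdot v_p\big(\prod_{j=0}^{f-1}(\det A)_j\big)$; $D'_L=L\otimes_{L_0}D'$ has the induced filtration $D'_L\cap\mathrm{Fil}^jD_L$. $D$ is weakly admissible if $t_H(D_L)=t_N(D)$ and $t_H(D'_L)\le t_N(D')$ for every $E^f$-submodule $D'$ stable under $\varphi$ and $N$. A weakly admissible sub-object is a nonzero $E^f$-submodule $D'$ stable under $\varphi$, $N$ and $G$ with $t_H(D'_L)=t_N(D')$; a weakly admissible $D$ is irreducible if it has no proper such $D'$. *)

theory Defs
  imports Main "HOL-Library.Function_Algebras" "HOL-Library.Groups_Big_Fun"
    "Jordan_Normal_Form.Determinant"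
begin

text \<open>An element d of D = (E^f)^2 (resp. of D_L = (E^m)^2) is a
  function d :: nat => nat => 'e, where d t j is the j-th component (in E^n,
  n = f resp. m) of the coefficient of eta_t, t in {1,2}.  All other values are 0.\<close>

type_synonym 'a vec2 = "nat \<Rightarrow> nat \<Rightarrow> 'a"

definition Dcar :: "nat \<Rightarrow> 'a::zero vec2 set" where
  "Dcar n = {d. \<forall>t j. (t \<notin> {1,2} \<or> n \<le> j) \<longrightarrow> d t j = 0}"

definition Dline1 :: "nat \<Rightarrow> 'a::zero vec2 set" where
  "Dline1 n = {d \<in> Dcar n. \<forall>j. d 2 j = 0}"

definition Dline2 :: "nat \<Rightarrow> 'a::zero vec2 set" where
  "Dline2 n = {d \<in> Dcar n. \<forall>j. d 1 j = 0}"

definition smul :: "(nat \<Rightarrow> 'a::times) \<Rightarrow> 'a vec2 \<Rightarrow> 'a vec2" where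
  "smul c d = (\<lambda>t j. c j * d t j)"

definition submod :: "nat \<Rightarrow> 'a::comm_ring_1 vec2 set \<Rightarrow> bool" where
  "submod n M \<longleftrightarrow> M \<subseteq> Dcar n \<and> 0 \<in> M \<and> (\<forall>a\<in>M. \<forall>b\<in>M. a + b \<in> M)
     \<and> (\<forall>c. \<forall>a\<in>M. smul c a \<in> M)"

text \<open>Frobenius: phi(a eta_1 + b eta_2) = alpha phi(a) eta_1 + delta phi(b) eta_2,
  phi(x_0,...,x_{f-1}) = (x_1,...,x_{f-1},x_0)\<close>
definition phiD :: "nat \<Rightarrow> 'a::comm_ring_1 \<Rightarrow> 'a \<Rightarrow> 'a vec2 \<Rightarrow> 'a vec2" where
  "phiD f \<alpha> \<delta> d = (\<lambda>t j. if j < f then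
       (if t = 1 then \<alpha> * d 1 ((j + 1) mod f)
        else if t = 2 then \<delta> * d 2 ((j + 1) mod f) else 0) else 0)"

definition is_free_basis :: "nat \<Rightarrow> 'a::comm_ring_1 vec2 set \<Rightarrow> nat \<Rightarrow> (nat \<Rightarrow> 'a vec2) \<Rightarrow> bool" where
  "is_free_basis f M r w \<longleftrightarrow> (\<forall>l<r. w l \<in> M) \<and>
     (\<forall>d\<in>M. \<exists>!c. (\<forall>l i. (r \<le> l \<or> f \<le> i) \<longrightarrow> c l i = 0) \<and> d = (\<Sum>l<r. smul (c l) (w l)))"

definition is_phi_matrix :: "nat \<Rightarrow> 'a::field \<Rightarrow> 'a \<Rightarrow> nat \<Rightarrow> (nat \<Rightarrow> 'a vec2)
     \<Rightarrow> (nat \<Rightarrow> nat \<Rightarrow> nat \<Rightarrow> 'a) \<Rightarrow> bool" where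
  "is_phi_matrix f \<alpha> \<delta> r w A \<longleftrightarrow>
     (\<forall>k l i. (r \<le> k \<or> r \<le> l \<or> f \<le> i) \<longrightarrow> A k l i = 0) \<and>
     (\<forall>i<f. det (mat r r (\<lambda>(k, l). A k l i)) \<noteq> 0) \<and>
     (\<forall>l<r. phiD f \<alpha> \<delta> (w l) = (\<Sum>k<r. smul (A k l) (w k)))"

definition tN :: "('a::field \<Rightarrow> real) \<Rightarrow> nat \<Rightarrow> nat \<Rightarrow> 'a \<Rightarrow> 'a \<Rightarrow> 'a vec2 set \<Rightarrow> real" where
  "tN v f e \<alpha> \<delta> M = (case SOME (r, w, A). is_free_basis f M r w \<and> is_phi_matrix f \<alpha> \<delta> r w A of
      (r, w, A) \<Rightarrow> real e * v (\<Prod>i<f. det (mat r r (\<lambda>(k, l). A k l i))))"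

text \<open>base change D -> D_L = L (x)_{L_0} D, via E^f -> E^m, a |-> a^{(x) e}
  (component s = f i + j of E^m receives component j of E^f)\<close>
definition bc :: "nat \<Rightarrow> nat \<Rightarrow> 'a::zero vec2 \<Rightarrow> 'a vec2" where
  "bc f m d = (\<lambda>t s. if s < m then d t (s mod f) else 0)"

text \<open>M_L = L (x)_{L_0} M, realised as the E^m-submodule of D_L generated by M\<close>
definition baseL :: "nat \<Rightarrow> nat \<Rightarrow> 'a::comm_ring_1 vec2 set \<Rightarrow> 'a vec2 set" where
  "baseL f m M = \<Inter> {N. submod m N \<and> bc f m ` M \<subseteq> N}"

definition Fil :: "nat \<Rightarrow> (nat \<Rightarrow> int) \<Rightarrow> (nat \<Rightarrow> 'a::comm_ring_1) \<Rightarrow> (nat \<Rightarrow> 'a) \<Rightarrow> int \<Rightarrow> 'a vec2 set" where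
  "Fil m k x y j = (if j \<le> 0 then Dcar m else
     {d. \<exists>c. d = (\<lambda>t s. if s < m \<and> j \<le> k s then
                 c s * (if t = 1 then x s else if t = 2 then y s else 0) else 0)})"

definition eproj :: "nat \<Rightarrow> 'a::zero vec2 \<Rightarrow> 'a vec2" where
  "eproj s d = (\<lambda>t u. if u = s then d t u else 0)"

definition Edim :: "'a::field vec2 set \<Rightarrow> nat" where
  "Edim S = vector_space.dim (\<lambda>c d. (\<lambda>t u. c * d t u)) S"

text \<open>t_H of a filtered E^m-module with filtration Fl;
  dim_E(e_s Fil^j / e_s Fil^{j+1}) = dim e_s Fil^j - dim e_s Fil^{j+1}\<close>
definition tH :: "nat \<Rightarrow> (int \<Rightarrow> 'a::field vec2 set) \<Rightarrow> int" where
  "tH m Fl = (\<Sum>s<m. Sum_any (\<lambda>j::int. j *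
      (int (Edim (eproj s ` Fl j)) - int (Edim (eproj s ` Fl (j + 1))))))"

definition tH_sub :: "nat \<Rightarrow> nat \<Rightarrow> (nat \<Rightarrow> int) \<Rightarrow> (nat \<Rightarrow> 'a::field) \<Rightarrow> (nat \<Rightarrow> 'a)
     \<Rightarrow> 'a vec2 set \<Rightarrow> int" where
  "tH_sub f e k x y M = tH (e * f) (\<lambda>j. baseL f (e * f) M \<inter> Fil (e * f) k x y j)"

text \<open>weak admissibility (N = 0, so every submodule is N-stable)\<close>
definition weakly_admissible :: "('a::field \<Rightarrow> real) \<Rightarrow> nat \<Rightarrow> nat \<Rightarrow> 'a \<Rightarrow> 'a
     \<Rightarrow> (nat \<Rightarrow> int) \<Rightarrow> (nat \<Rightarrow> 'a) \<Rightarrow> (nat \<Rightarrow> 'a) \<Rightarrow> bool" where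
  "weakly_admissible v f e \<alpha> \<delta> k x y \<longleftrightarrow>
     real_of_int (tH_sub f e k x y (Dcar f)) = tN v f e \<alpha> \<delta> (Dcar f) \<and>
     (\<forall>M. submod f M \<and> phiD f \<alpha> \<delta> ` M \<subseteq> M \<longrightarrow>
          real_of_int (tH_sub f e k x y M) \<le> tN v f e \<alpha> \<delta> M)"

definition wa_subobject :: "('a::field \<Rightarrow> real) \<Rightarrow> nat \<Rightarrow> nat \<Rightarrow> 'a \<Rightarrow> 'a
     \<Rightarrow> (nat \<Rightarrow> int) \<Rightarrow> (nat \<Rightarrow> 'a) \<Rightarrow> (nat \<Rightarrow> 'a) \<Rightarrow> 'g set \<Rightarrow> ('g \<Rightarrow> 'a vec2 \<Rightarrow> 'a vec2)
     \<Rightarrow> 'a vec2 set \<Rightarrow> bool" where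
  "wa_subobject v f e \<alpha> \<delta> k x y G act M \<longleftrightarrow>
     M \<noteq> {0} \<and> submod f M \<and> phiD f \<alpha> \<delta> ` M \<subseteq> M \<and> (\<forall>g\<in>G. act g ` M \<subseteq> M) \<and>
     real_of_int (tH_sub f e k x y M) = tN v f e \<alpha> \<delta> M"

definition irreducible_wa :: "('a::field \<Rightarrow> real) \<Rightarrow> nat \<Rightarrow> nat \<Rightarrow> 'a \<Rightarrow> 'a
     \<Rightarrow> (nat \<Rightarrow> int) \<Rightarrow> (nat \<Rightarrow> 'a) \<Rightarrow> (nat \<Rightarrow> 'a) \<Rightarrow> 'g set \<Rightarrow> ('g \<Rightarrow> 'a vec2 \<Rightarrow> 'a vec2) \<Rightarrow> bool" where
  "irreducible_wa v f e \<alpha> \<delta> k x y G act \<longleftrightarrow> weakly_admissible v f e \<alpha> \<delta> k x y \<and>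
     \<not> (\<exists>M. wa_subobject v f e \<alpha> \<delta> k x y G act M \<and> M \<noteq> Dcar f)"

end

theory Submission
  imports Defs "HOL-Number_Theory.Cong"
begin

(*
  The model: D = (E^f)^2 with Frobenius phi(a eta_1 + b eta_2) = alpha phi(a) eta_1 + delta phi(b) eta_2
  and N = 0.  The theorem follows from a complete description of the phi-stable submodules
  together with the two invariants t_H and t_N on each of them.

  1. Classification: since alpha^f ~= delta^f, the operator phi^f - delta^f (resp. phi^f - alpha^f)
     kills one eta-component and is invertible on the other; combined with the rotation
     of coordinates by phi, any phi-stable submodule containing a vector with a nonzero
     eta_t-component contains the whole line E^f eta_t.  Hence the phi-stable submodules
     are exactly 0, D_1 = E^f eta_1, D_2 = E^f eta_2 and D.
  2. Newton numbers: for every basis of one of these modules, the product over the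
     coordinates of det[phi] equals 1, alpha^f, delta^f, (alpha delta)^f respectively
     (a cyclic-product argument), so t_N = 0, ef v(alpha), ef v(delta), ef v(alpha delta).
  3. Hodge numbers: computing the E-dimensions of the graded pieces coordinatewise gives
     t_H = 0, sum_{y_i = 0} k_i, sum_{x_i = 0} k_i and sum k_i.
  4. With these four pairs of numbers, weak admissibility and the list of weakly admissible
     sub-objects become linear conditions (packaged in the locale Fss_module), from which
     every part of the theorem follows.
*)

section \<open>Coordinates on (E^n)^2\<close>

definition coord2 :: "'a \<Rightarrow> 'a \<Rightarrow> nat \<Rightarrow> 'a::zero" where
  "coord2 a b t = (if t = 1 then a else if t = 2 then b else 0)"

lemma coord2_simps [simp]:
  "coord2 a b 1 = a" "coord2 a b (Suc 0) = a" "coord2 a b 2 = b" "coord2 a b (Suc (Suc 0)) = b"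
  by (auto simp: coord2_def)

definition line :: "nat \<Rightarrow> nat \<Rightarrow> 'a::zero vec2 set" where
  "line t n = {d \<in> Dcar n. \<forall>j. d (3 - t) j = 0}"

lemma Dline1_eq: "Dline1 n = line 1 n" and Dline2_eq: "Dline2 n = line 2 n"
  by (simp_all add: Dline1_def Dline2_def line_def)

definition eta :: "nat \<Rightarrow> nat \<Rightarrow> 'a::{zero,one} vec2" where
  "eta t n = (\<lambda>t' j. if t' = t \<and> j < n then 1 else 0)"

definition eta_at :: "nat \<Rightarrow> nat \<Rightarrow> 'a::{zero,one} vec2" where
  "eta_at t i = (\<lambda>t' j. if t' = t \<and> j = i then 1 else 0)"

lemma zero_Dcar: "(0::'a::zero vec2) \<in> Dcar n"
  by (simp add: Dcar_def)

lemma zero_line: "(0::'a::zero vec2) \<in> line t n"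
  by (simp add: line_def Dcar_def)

lemma Dcar_zero: "a \<in> Dcar n \<Longrightarrow> t \<notin> {1,2} \<or> n \<le> j \<Longrightarrow> a t j = 0"
  by (auto simp: Dcar_def)

lemma line_other: "d \<in> line t n \<Longrightarrow> t \<in> {1,2} \<Longrightarrow> t' \<noteq> t \<Longrightarrow> d t' j = 0"
  by (cases "t' = 3 - t") (auto simp: line_def Dcar_def)

lemma eta_line: "t \<in> {1,2} \<Longrightarrow> eta t n \<in> line t n"
  by (auto simp: line_def Dcar_def eta_def)

lemma eta_Dcar: "t \<in> {1,2} \<Longrightarrow> eta t n \<in> Dcar n"
  by (auto simp: Dcar_def eta_def)

lemma eta_at_line: "t \<in> {1,2} \<Longrightarrow> i < n \<Longrightarrow> eta_at t i \<in> line t n"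
  by (auto simp: line_def Dcar_def eta_at_def)

lemma eta_at_Dcar: "t \<in> {1,2} \<Longrightarrow> i < n \<Longrightarrow> eta_at t i \<in> Dcar n"
  by (auto simp: Dcar_def eta_at_def)

lemma eta_nonzero: "0 < n \<Longrightarrow> eta t n \<noteq> (0::'a::zero_neq_one vec2)"
  by (auto simp: eta_def fun_eq_iff)

lemma eta_notin_line:
  "0 < n \<Longrightarrow> eta 1 n \<notin> (line 2 n :: 'a::zero_neq_one vec2 set)"
  "0 < n \<Longrightarrow> eta 2 n \<notin> (line 1 n :: 'a::zero_neq_one vec2 set)"
  by (auto simp: line_def eta_def fun_eq_iff)

lemma eta_at_nonzero: "eta_at t s \<noteq> (0::'a::zero_neq_one vec2)"
  by (auto simp: eta_at_def fun_eq_iff)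

lemma sum_vec2: "(sum F A) t j = (\<Sum>l\<in>A. F l t j)"
  by (induction A rule: infinite_finite_induct) auto

lemma eta_sum: "(\<Sum>j<n. eta_at t j) = (eta t n :: 'a::comm_ring_1 vec2)"
proof (intro ext)
  fix t' j'
  show "(\<Sum>j<n. eta_at t j) t' j' = (eta t n :: 'a vec2) t' j'"
    by (cases "t' = t") (simp_all add: sum_vec2 eta_at_def eta_def)
qed

lemma line_inter: "line 1 n \<inter> line 2 n = {0::'a::zero vec2}"
  by (auto simp: line_def Dcar_def fun_eq_iff) (metis numeral_2_eq_2)

lemma line_decomp:
  assumes t: "t \<in> {1,2}" and d: "d \<in> line t n"
  shows "d = smul (d t) (eta t n :: 'a::comm_ring_1 vec2)"
proof (intro ext)
  fix t' j
  show "d t' j = smul (d t) (eta t n) t' j"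
    using line_other[OF d t, of t' j] d
    by (cases "t' = t") (auto simp: line_def Dcar_def smul_def eta_def)
qed

lemma Dcar_decomp:
  "d \<in> Dcar n \<Longrightarrow> d = smul (d 1) (eta 1 n) + smul (d 2) (eta 2 n :: 'a::comm_ring_1 vec2)"
  by (auto simp: Dcar_def smul_def eta_def fun_eq_iff)

lemma submod_smul: "submod n M \<Longrightarrow> a \<in> M \<Longrightarrow> smul c a \<in> M"
  and submod_add: "submod n M \<Longrightarrow> a \<in> M \<Longrightarrow> b \<in> M \<Longrightarrow> a + b \<in> M"
  and submod_Dcar: "submod n M \<Longrightarrow> M \<subseteq> Dcar n"
  and submod_0: "submod n M \<Longrightarrow> 0 \<in> M"
  by (simp_all add: submod_def)

lemma submod_sum: "submod n M \<Longrightarrow> (\<And>a. a \<in> A \<Longrightarrow> F a \<in> M) \<Longrightarrow> sum F A \<in> M"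
  by (induction A rule: infinite_finite_induct) (auto intro: submod_add submod_0)

lemma submod_zero: "submod n {0::'a::comm_ring_1 vec2}"
  and submod_line: "t \<in> {1,2} \<Longrightarrow> submod n (line t n :: 'a vec2 set)"
  and submod_whole: "submod n (Dcar n :: 'a vec2 set)"
  by (auto simp: submod_def line_def Dcar_def smul_def fun_eq_iff)

lemma line_subset_submod:
  "submod n M \<Longrightarrow> t \<in> {1,2} \<Longrightarrow> eta t n \<in> M \<Longrightarrow> line t n \<subseteq> M"
  by (metis line_decomp submod_smul subsetI)

lemma Dcar_subset_submod:
  assumes "submod n M" "eta 1 n \<in> M" "eta 2 n \<in> M"
  shows "Dcar n \<subseteq> M"
  by (metis Dcar_decomp assms submod_add submod_smul subsetI)

section \<open>Frobenius and its stable submodules\<close>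

lemma phiD_eq: "phiD f a b d t j = (if j < f then coord2 a b t * d t ((j + 1) mod f) else 0)"
  by (simp add: phiD_def coord2_def)

lemma phiD_Dcar: "phiD f a b d \<in> Dcar f"
  by (auto simp: Dcar_def phiD_eq coord2_def)

lemma phiD_line: "phiD f a b ` line t f \<subseteq> line t f"
  by (auto simp: line_def phiD_Dcar phiD_eq)

lemma phiD_whole: "phiD f a b ` Dcar f \<subseteq> Dcar f"
  using phiD_Dcar by blast

lemma phiD_zero: "phiD f a b ` {0::'a::comm_ring_1 vec2} \<subseteq> {0}"
  by (auto simp: phiD_eq fun_eq_iff)

lemma phiD_iter_Dcar: "d \<in> Dcar f \<Longrightarrow> (phiD f a b ^^ n) d \<in> Dcar f"
  by (induction n) (auto simp: phiD_Dcar)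

lemma phiD_iter_stable: "phiD f a b ` M \<subseteq> M \<Longrightarrow> d \<in> M \<Longrightarrow> (phiD f a b ^^ n) d \<in> M"
  by (induction n) auto

lemma phiD_iter:
  assumes "d \<in> Dcar f"
  shows "(phiD f a b ^^ n) d t j = (if j < f then coord2 a b t ^ n * d t ((j + n) mod f) else 0)"
proof (cases "j < f")
  case False
  then show ?thesis using Dcar_zero[OF phiD_iter_Dcar[OF assms]] by simp
next
  case True
  then show ?thesis
  proof (induction n arbitrary: j)
    case (Suc n)
    have "(phiD f a b ^^ Suc n) d t j = phiD f a b ((phiD f a b ^^ n) d) t j" by simp
    also have "\<dots> = coord2 a b t * (phiD f a b ^^ n) d t ((j + 1) mod f)"
      using Suc.prems by (simp only: phiD_eq if_True)
    also have "\<dots> = coord2 a b t * (coord2 a b t ^ n * d t (((j + 1) mod f + n) mod f))"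
      using Suc.IH Suc.prems by simp
    also have "((j + 1) mod f + n) mod f = (j + Suc n) mod f"
      by (simp add: mod_add_left_eq)
    finally show ?case using Suc.prems by simp
  qed simp
qed

text \<open>Shifting by i + f - j moves the coordinate j, and only j, to i.\<close>
lemma rotate_mod_eq:
  fixes i j j' f :: nat
  assumes "i < f" "j < f" "j' < f"
  shows "(j' + (i + f - j)) mod f = i \<longleftrightarrow> j' = j"
proof -
  have "j + (i + f - j) = i + f" using assms by arith
  then have "i = (j + (i + f - j)) mod f" using assms by simp
  then have "(j' + (i + f - j)) mod f = i \<longleftrightarrow> [j' + (i + f - j) = j + (i + f - j)] (mod f)"
    by (simp add: cong_def)
  also have "\<dots> \<longleftrightarrow> [j' = j] (mod f)" by (rule cong_add_rcancel_nat)
  also have "\<dots> \<longleftrightarrow> j' = j" using assms by (simp add: cong_def)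
  finally show ?thesis .
qed

text \<open>Projection step: if the eigenvalues of phi^f differ, then (phi^f - lambda'^f), applied to
  e_i d, isolates the eta_t-component; so a stable submodule containing a vector d with
  d t i ~= 0 contains e_i eta_t.\<close>
lemma stable_contains_eta_at:
  fixes a b :: "'a::field"
  assumes sm: "submod f M" and st: "phiD f a b ` M \<subseteq> M" and t: "t \<in> {1,2}"
    and ne: "coord2 a b t ^ f \<noteq> coord2 a b (3 - t) ^ f"
    and dM: "d \<in> M" and dti: "d t i \<noteq> 0"
  shows "eta_at t i \<in> M"
proof -
  have dD: "d \<in> Dcar f" using sm dM submod_Dcar by blast
  have i: "i < f" using Dcar_zero[OF dD, of t i] dti t by fastforce
  define d1 where "d1 = smul (\<lambda>j. if j = i then 1 else 0) d"
  have d1M: "d1 \<in> M" unfolding d1_def using sm dM by (rule submod_smul)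
  have d1D: "d1 \<in> Dcar f" using sm d1M submod_Dcar by blast
  define X where "X = ((phiD f a b) ^^ f) d1"
  have XM: "X \<in> M" unfolding X_def using st d1M by (rule phiD_iter_stable)
  have X: "X t' j = coord2 a b t' ^ f * d1 t' j" for t' j
    unfolding X_def phiD_iter[OF d1D] using Dcar_zero[OF d1D, of t' j] by simp
  define c0 where "c0 = (coord2 a b (3 - t) ^ f - coord2 a b t ^ f) * d t i"
  have c0: "c0 \<noteq> 0" using ne dti unfolding c0_def by simp
  \<comment> \<open>Z = (lambda'^f d1 - phi^f d1) / c0 kills the eta_{3-t}-part and normalises the rest.\<close>
  define Z where "Z = smul (\<lambda>_. 1 / c0) (smul (\<lambda>_. -1) X + smul (\<lambda>_. coord2 a b (3 - t) ^ f) d1)"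
  have ZM: "Z \<in> M" unfolding Z_def
    by (intro submod_smul[OF sm] submod_add[OF sm] XM d1M)
  have "Z t' j = eta_at t i t' j" for t' j
  proof -
    have Z: "Z t' j = (1 / c0) * ((coord2 a b (3 - t) ^ f - coord2 a b t' ^ f) * d1 t' j)"
      unfolding Z_def smul_def X by (simp add: algebra_simps)
    consider "t' = t" | "t' = 3 - t" | "t' \<notin> {1,2}" using t by fastforce
    then show ?thesis
    proof cases
      case 1
      then show ?thesis unfolding Z using c0 by (simp add: d1_def smul_def eta_at_def c0_def)
    next
      case 2
      then show ?thesis unfolding Z using t by (auto simp: eta_at_def)
    next
      case 3
      then show ?thesis unfolding Z using Dcar_zero[OF d1D, of t' j] t by (auto simp: eta_at_def)
    qed
  qed
  then show ?thesis using ZM by (metis ext)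
qed

text \<open>Rotation step: phi^n moves e_i eta_t to a nonzero multiple of e_j eta_t.\<close>
lemma stable_rotate_eta_at:
  fixes a b :: "'a::field"
  assumes sm: "submod f M" and st: "phiD f a b ` M \<subseteq> M" and t: "t \<in> {1,2}"
    and nz: "coord2 a b t \<noteq> 0" and uM: "eta_at t i \<in> M" and i: "i < f" and j: "j < f"
  shows "eta_at t j \<in> M"
proof -
  define n where "n = i + f - j"
  define W where "W = ((phiD f a b) ^^ n) (eta_at t i)"
  have WM: "W \<in> M" unfolding W_def using st uM by (rule phiD_iter_stable)
  have "smul (\<lambda>_. 1 / coord2 a b t ^ n) W t' j' = eta_at t j t' j'" for t' j'
  proof (cases "j' < f")
    case True
    have "W t' j' = coord2 a b t' ^ n * eta_at t i t' ((j' + n) mod f)"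
      unfolding W_def phiD_iter[OF eta_at_Dcar[OF t i]] using True by simp
    then show ?thesis using nz rotate_mod_eq[OF i j True]
      by (cases "t' = t") (simp_all add: smul_def eta_at_def n_def)
  next
    case False
    then have "W t' j' = 0" unfolding W_def phiD_iter[OF eta_at_Dcar[OF t i]] by simp
    then show ?thesis using False j by (simp add: smul_def eta_at_def)
  qed
  moreover have "smul (\<lambda>_. 1 / coord2 a b t ^ n) W \<in> M" by (rule submod_smul[OF sm WM])
  ultimately show ?thesis by (metis ext)
qed

lemma stable_line_subset:
  fixes a b :: "'a::field"
  assumes sm: "submod f M" and st: "phiD f a b ` M \<subseteq> M" and t: "t \<in> {1,2}"
    and ne: "coord2 a b t ^ f \<noteq> coord2 a b (3 - t) ^ f" and nz: "coord2 a b t \<noteq> 0"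
    and dM: "d \<in> M" and dti: "d t i \<noteq> 0"
  shows "line t f \<subseteq> M"
proof -
  have iM: "eta_at t i \<in> M" by (rule stable_contains_eta_at[OF sm st t ne dM dti])
  have "i < f"
    using Dcar_zero[of d f t i] submod_Dcar[OF sm] dM dti t by fastforce
  then have "eta_at t j \<in> M" if "j < f" for j
    using stable_rotate_eta_at[OF sm st t nz iM] that by blast
  then have "eta t f \<in> M" unfolding eta_sum[symmetric] by (intro submod_sum[OF sm]) auto
  then show ?thesis by (rule line_subset_submod[OF sm t])
qed

lemma stable_submodules:
  fixes a b :: "'a::field"
  assumes sm: "submod f M" and st: "phiD f a b ` M \<subseteq> M"
    and a0: "a \<noteq> 0" and b0: "b \<noteq> 0" and ab: "a ^ f \<noteq> b ^ f"
  shows "M = {0} \<or> M = line 1 f \<or> M = line 2 f \<or> M = Dcar f"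
proof -
  define meets where "meets t \<longleftrightarrow> (\<exists>d\<in>M. \<exists>i. d t i \<noteq> 0)" for t
  have MD: "M \<subseteq> Dcar f" using sm by (rule submod_Dcar)
  have in1: "line 1 f \<subseteq> M" if "meets 1"
    using that stable_line_subset[OF sm st, of 1] a0 ab unfolding meets_def by auto
  have ba: "b ^ f \<noteq> a ^ f" using ab by metis
  have in2: "line 2 f \<subseteq> M" if "meets 2"
    using that stable_line_subset[OF sm st, of 2] b0 ba unfolding meets_def by auto
  have sub1: "M \<subseteq> line 1 f" if "\<not> meets 2" using that MD by (auto simp: meets_def line_def)
  have sub2: "M \<subseteq> line 2 f" if "\<not> meets 1" using that MD by (auto simp: meets_def line_def)
  consider "meets 1" "meets 2" | "meets 1" "\<not> meets 2" | "\<not> meets 1" "meets 2"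
    | "\<not> meets 1" "\<not> meets 2" by blast
  then show ?thesis
  proof cases
    case 1
    then have "Dcar f \<subseteq> M"
      using Dcar_subset_submod[OF sm] in1 in2 eta_line[of 1 f] eta_line[of 2 f] by blast
    then show ?thesis using MD by blast
  next
    case 2
    then show ?thesis using in1 sub1 by blast
  next
    case 3
    then show ?thesis using in2 sub2 by blast
  next
    case 4
    then have "M \<subseteq> {0}" using sub1 sub2 line_inter[of f] by blast
    then show ?thesis using submod_0[OF sm] by blast
  qed
qed

section \<open>Newton numbers\<close>

text \<open>t_N does not depend on the chosen basis: if every admissible pair (basis, matrix of phi)
  gives the same product of determinants Q, then t_N = e v(Q).\<close>
lemma tN_determined:
  assumes ex: "\<exists>r w A. is_free_basis f M r w \<and> is_phi_matrix f a b r w A"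
    and all: "\<And>r w A. is_free_basis f M r w \<Longrightarrow> is_phi_matrix f a b r w A \<Longrightarrow>
       (\<Prod>i<f. det (mat r r (\<lambda>(k, l). A k l i))) = Q"
  shows "tN v f e a b M = real e * v Q"
proof -
  define P where "P = (\<lambda>(r, w, A). is_free_basis f M r w \<and> is_phi_matrix f a b r w A)"
  have "\<exists>x. P x" using ex unfolding P_def by auto
  then have "P (SOME x. P x)" by (rule someI_ex)
  then obtain r w A where sel: "(SOME x. P x) = (r, w, A)"
    and B: "is_free_basis f M r w" and Ph: "is_phi_matrix f a b r w A"
    unfolding P_def by (cases "SOME x. P x") auto
  have "(\<Prod>i<f. det (mat r r (\<lambda>(k, l). A k l i))) = Q" using all[OF B Ph] .
  then show ?thesis unfolding tN_def using sel unfolding P_def by simp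
qed

lemma prod_rotate:
  fixes g :: "nat \<Rightarrow> 'a::comm_monoid_mult"
  shows "(\<Prod>i<f. g ((i + 1) mod f)) = (\<Prod>i<f. g i)"
proof -
  define h where "h i = (i + 1) mod f" for i
  have inj: "inj_on h {..<f}"
  proof (rule inj_onI)
    fix i j assume "i \<in> {..<f}" "j \<in> {..<f}" "h i = h j"
    then show "i = j" using cong_add_rcancel_nat[of i 1 j f] by (simp add: h_def cong_def)
  qed
  have "h ` {..<f} = {..<f}"
    by (rule endo_inj_surj[OF _ _ inj]) (auto simp: h_def)
  then have "(\<Prod>i<f. g i) = prod (g \<circ> h) {..<f}" by (metis prod.reindex[OF inj])
  then show ?thesis by (simp add: h_def)
qed

text \<open>If a_i g_i = c g_{i+1} with all g_i nonzero, then prod a_i = c^f.  This is how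
  det[phi] is computed: a nowhere vanishing "Wronskian" g is rescaled by phi.\<close>
lemma cyclic_product:
  fixes g a :: "nat \<Rightarrow> 'a::field"
  assumes rel: "\<And>i. i < f \<Longrightarrow> a i * g i = c * g ((i + 1) mod f)"
    and nz: "\<And>i. i < f \<Longrightarrow> g i \<noteq> 0"
  shows "(\<Prod>i<f. a i) = c ^ f"
proof -
  have "(\<Prod>i<f. a i) * (\<Prod>i<f. g i) = (\<Prod>i<f. c * g ((i + 1) mod f))"
    using rel by (simp add: prod.distrib[symmetric])
  also have "\<dots> = c ^ f * (\<Prod>i<f. g ((i + 1) mod f))" by (simp add: prod.distrib)
  also have "\<dots> = c ^ f * (\<Prod>i<f. g i)" by (simp only: prod_rotate)
  finally show ?thesis using nz by (simp add: prod_zero_iff)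
qed

lemma det0: "det (mat 0 0 g) = (1 :: 'a::comm_ring_1)"
  by (rule det_dim_zero) simp

lemma det1: "det (mat 1 1 g) = (g (0,0) :: 'a::comm_ring_1)"
  by (subst laplace_expansion_column[of _ 1 0]) (auto simp: cofactor_def det_def mat_delete_def)

lemma det2: "det (mat 2 2 g) = (g (0,0) * g (1,1) - g (0,1) * g (1,0) :: 'a::comm_ring_1)"
  apply (subst laplace_expansion_column[of _ 2 0])
  apply (auto simp: cofactor_def numeral_2_eq_2 lessThan_Suc)
  apply (subst (1 2) laplace_expansion_column[of _ 1 0])
  apply (auto simp: cofactor_def mat_delete_def det_def insert_index_def)
  done

lemma two_vectors_dependent:
  fixes x1 x2 y1 y2 :: "'a::comm_ring_1"
  assumes "x1 * y2 - x2 * y1 = 0"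
  shows "\<exists>p q. (p, q) \<noteq> (0, 0) \<and> p * x1 + q * y1 = 0 \<and> p * x2 + q * y2 = 0"
proof (cases "x1 = 0 \<and> x2 = 0")
  case True
  then show ?thesis by (intro exI[of _ 1] exI[of _ 0]) simp
next
  case False
  show ?thesis
  proof (cases "x1 = 0")
    case False
    then show ?thesis using assms
      by (intro exI[of _ "- y1"] exI[of _ x1]) (auto simp: algebra_simps)
  next
    case True
    then show ?thesis using assms \<open>\<not> (x1 = 0 \<and> x2 = 0)\<close>
      by (intro exI[of _ "- y2"] exI[of _ x2]) (auto simp: algebra_simps)
  qed
qed

lemma three_vectors_dependent:
  fixes x1 x2 y1 y2 z1 z2 :: "'a::comm_ring_1"
  shows "\<exists>p q s. (p, q, s) \<noteq> (0, 0, 0) \<and> p * x1 + q * y1 + s * z1 = 0 \<and> p * x2 + q * y2 + s * z2 = 0"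
proof (cases "x1 * y2 - x2 * y1 = 0")
  case True
  then obtain p q where "(p, q) \<noteq> (0, 0)" "p * x1 + q * y1 = 0" "p * x2 + q * y2 = 0"
    using two_vectors_dependent by blast
  then show ?thesis by (intro exI[of _ p] exI[of _ q] exI[of _ 0]) auto
next
  case False
  show ?thesis
    by (rule exI[of _ "y1 * z2 - y2 * z1"], rule exI[of _ "- (x1 * z2 - x2 * z1)"],
        rule exI[of _ "x1 * y2 - x2 * y1"]) (use False in \<open>auto simp: algebra_simps\<close>)
qed

lemma free_basis_indep:
  assumes B: "is_free_basis f M r w" and z: "(0::'a::comm_ring_1 vec2) \<in> M"
    and c: "\<forall>l i. (r \<le> l \<or> f \<le> i) \<longrightarrow> c l i = 0"
    and s: "(\<Sum>l<r. smul (c l) (w l)) = 0"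
  shows "c = (\<lambda>l i. 0)"
proof -
  define Q where "Q c \<longleftrightarrow> (\<forall>l i. (r \<le> l \<or> f \<le> i) \<longrightarrow> c l i = 0) \<and>
    (0::'a vec2) = (\<Sum>l<r. smul (c l) (w l))" for c
  have "\<exists>!c. Q c" using B z unfolding is_free_basis_def Q_def by blast
  moreover have "Q (\<lambda>l i. 0)" by (simp add: Q_def smul_def fun_eq_iff sum_vec2)
  moreover have "Q c" unfolding Q_def using c s by simp
  ultimately show ?thesis by blast
qed

lemma free_basis_indep_at:
  assumes B: "is_free_basis f M r w" and z: "(0::'a::comm_ring_1 vec2) \<in> M" and i: "i < f"
    and rel: "\<And>t. (\<Sum>l<r. p l * w l t i) = 0" and l: "l < r"
  shows "p l = 0"
proof -
  define c where "c l j = (if l < r \<and> j = i then p l else 0)" for l j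
  have "(\<Sum>l<r. smul (c l) (w l)) t j = 0" for t j
  proof (cases "j = i")
    case True
    have "(\<Sum>l<r. smul (c l) (w l)) t j = (\<Sum>l<r. p l * w l t i)"
      unfolding sum_vec2 using True by (intro sum.cong) (auto simp: smul_def c_def)
    then show ?thesis using rel by simp
  next
    case False
    then show ?thesis by (simp add: sum_vec2 smul_def c_def)
  qed
  then have "c = (\<lambda>l i. 0)" using i by (intro free_basis_indep[OF B z]) (auto simp: c_def fun_eq_iff)
  then show ?thesis using l by (metis c_def)
qed

lemma free_basis_expand:
  "is_free_basis f M r w \<Longrightarrow> d \<in> M \<Longrightarrow>
    \<exists>c. (\<forall>l i. (r \<le> l \<or> f \<le> i) \<longrightarrow> c l i = 0) \<and> d = (\<Sum>l<r. smul (c l) (w l))"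
  unfolding is_free_basis_def by blast

lemma sum_smul_apply: "(\<Sum>l<r. smul (c l) (w l)) t j = (\<Sum>l<r. c l j * w l t j)"
  by (simp add: sum_vec2 smul_def)

lemma sum_initial_segment:
  fixes g :: "nat \<Rightarrow> 'a::comm_monoid_add"
  shows "n \<le> r \<Longrightarrow> (\<And>l. n \<le> l \<Longrightarrow> g l = 0) \<Longrightarrow> (\<Sum>l<r. g l) = (\<Sum>l<n. g l)"
  by (intro sum.mono_neutral_right) auto

lemma zero_free_basis_rank:
  assumes f1: "1 \<le> f" and B: "is_free_basis f {0::'a::comm_ring_1 vec2} r w"
  shows "r = 0"
proof (rule ccontr)
  assume "r \<noteq> 0"
  have "w l = 0" if "l < r" for l using B that by (simp add: is_free_basis_def)
  then have "(1::'a) = 0"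
    using free_basis_indep_at[OF B _ _ _ \<open>r \<noteq> 0\<close>[unfolded neq0_conv], of 0 "\<lambda>_. 1"] f1 by simp
  then show False by simp
qed

lemma zero_has_basis: "\<exists>r w A. is_free_basis f {0::'a::field vec2} r w \<and> is_phi_matrix f a b r w A"
proof (intro exI conjI)
  show "is_free_basis f {0::'a vec2} 0 (\<lambda>_. 0)"
    unfolding is_free_basis_def
    by (auto intro!: ex1I[of _ "\<lambda>l i. 0"] simp: fun_eq_iff)
  show "is_phi_matrix f a b 0 (\<lambda>_. 0) (\<lambda>_ _ _. 0)"
    unfolding is_phi_matrix_def by (simp add: det0)
qed

lemma tN_zero:
  fixes a b :: "'a::field"
  assumes "1 \<le> f"
  shows "tN v f e a b {0} = real e * v 1"
proof (rule tN_determined[OF zero_has_basis])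
  fix r w A assume B: "is_free_basis f {0::'a vec2} r w"
  show "(\<Prod>i<f. det (mat r r (\<lambda>(k, l). A k l i))) = 1"
    using zero_free_basis_rank[OF assms B] by (simp add: det0)
qed

lemma line_free_basis:
  assumes f1: "1 \<le> f" and t: "t \<in> {1,2}" and B: "is_free_basis f (line t f) r w"
  shows "r = 1" and "\<And>i. i < f \<Longrightarrow> (w 0 t i :: 'a::comm_ring_1) \<noteq> 0"
proof -
  have wL: "w l \<in> line t f" if "l < r" for l :: nat using B that by (simp add: is_free_basis_def)
  have z: "(0::'a vec2) \<in> line t f" by (rule zero_line)
  have r0: "r \<noteq> 0"
  proof
    assume "r = 0"
    then have "eta t f = (0::'a vec2)" using free_basis_expand[OF B eta_line[OF t]] by auto
    then have "eta t f t 0 = (0::'a)" by simp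
    then show False using f1 by (simp add: eta_def)
  qed
  have r2: "\<not> 2 \<le> r"
  proof
    assume r2: "2 \<le> r"
    obtain p q where pq: "(p, q) \<noteq> (0, 0)" "p * w 0 t 0 + q * w 1 t 0 = 0"
      using two_vectors_dependent[of "w 0 t 0" 0 0 "w 1 t 0"] by auto
    define P where "P l = (if l = 0 then p else if l = 1 then q else 0)" for l :: nat
    have "(\<Sum>l<r. P l * w l t' 0) = 0" for t'
    proof -
      have "(\<Sum>l<r. P l * w l t' 0) = P 0 * w 0 t' 0 + P 1 * w 1 t' 0"
        using r2 by (subst sum_initial_segment[of 2]) (auto simp: P_def numeral_2_eq_2)
      then show ?thesis using pq line_other[OF wL t] r2 by (cases "t' = t") (auto simp: P_def)
    qed
    then have "P 0 = 0" "P 1 = 0"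
      using free_basis_indep_at[OF B z, of 0 P] f1 r2 by auto
    then show False using pq by (simp add: P_def)
  qed
  show r1: "r = 1" using r0 r2 by simp
  fix i assume i: "i < f"
  show "w 0 t i \<noteq> 0"
  proof
    assume w0: "w 0 t i = 0"
    obtain c where "eta_at t i = (\<Sum>l<r. smul (c l) (w l))"
      using free_basis_expand[OF B eta_at_line[OF t i]] by blast
    then have "eta_at t i t i = (\<Sum>l<r. smul (c l) (w l)) t i" by simp
    then show False using w0 r1 by (simp add: sum_smul_apply eta_at_def smul_def)
  qed
qed

text \<open>phi(w_0) = A_00 w_0 and phi rescales the eta_t-component by coord2 a b t and shifts it,
  so the cyclic product of the A_00 is (coord2 a b t)^f.\<close>
lemma line_det_product:
  fixes a b :: "'a::field"
  assumes f1: "1 \<le> f" and t: "t \<in> {1,2}" and B: "is_free_basis f (line t f) r w"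
    and P: "is_phi_matrix f a b r w A"
  shows "(\<Prod>i<f. det (mat r r (\<lambda>(k, l). A k l i))) = coord2 a b t ^ f"
proof -
  note r1 = line_free_basis(1)[OF f1 t B]
  have ph: "phiD f a b (w 0) = smul (A 0 0) (w 0)"
    using P r1 unfolding is_phi_matrix_def by auto
  have "A 0 0 i * w 0 t i = coord2 a b t * w 0 t ((i + 1) mod f)" if i: "i < f" for i
    using fun_cong[OF fun_cong[OF ph, of t], of i] i by (simp add: phiD_eq smul_def)
  then have "(\<Prod>i<f. A 0 0 i) = coord2 a b t ^ f"
    using line_free_basis(2)[OF f1 t B] by (intro cyclic_product) auto
  then show ?thesis unfolding r1 det1 by simp
qed

lemma line_has_basis:
  fixes a b :: "'a::field"
  assumes t: "t \<in> {1,2}" and nz: "coord2 a b t \<noteq> 0"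
  shows "\<exists>r w A. is_free_basis f (line t f) r w \<and> is_phi_matrix f a b r w A"
proof (intro exI conjI)
  let ?w = "\<lambda>_::nat. eta t f :: 'a vec2"
  let ?A = "\<lambda>(k::nat) (l::nat) (i::nat). if k = 0 \<and> l = 0 \<and> i < f then coord2 a b t else 0"
  show "is_free_basis f (line t f) 1 ?w"
    unfolding is_free_basis_def
  proof (intro conjI ballI allI impI)
    show "\<And>l. l < 1 \<Longrightarrow> ?w l \<in> line t f" using eta_line[OF t] by blast
    fix d :: "'a vec2" assume d: "d \<in> line t f"
    let ?c = "\<lambda>(l::nat) (i::nat). if l = 0 \<and> i < f then d t i else 0"
    have dt: "d t i = 0" if "f \<le> i" for i using d that by (auto simp: line_def Dcar_def)
    show "\<exists>!c. (\<forall>l i. (1 \<le> l \<or> f \<le> i) \<longrightarrow> c l i = 0) \<and> d = (\<Sum>l<1. smul (c l) (?w l))"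
    proof (rule ex1I[of _ ?c])
      have "d = smul (d t) (eta t f)" by (rule line_decomp[OF t d])
      also have "\<dots> = smul (?c 0) (eta t f)" using dt by (auto simp: smul_def eta_def fun_eq_iff)
      finally show "(\<forall>l i. (1 \<le> l \<or> f \<le> i) \<longrightarrow> ?c l i = 0) \<and> d = (\<Sum>l<1. smul (?c l) (?w l))"
        by auto
      fix c assume c: "(\<forall>l i. (1 \<le> l \<or> f \<le> i) \<longrightarrow> c l i = 0) \<and> d = (\<Sum>l<1. smul (c l) (?w l))"
      have "c l i = ?c l i" for l i
      proof (cases "l = 0 \<and> i < f")
        case True
        have "d t i = (\<Sum>l<1. smul (c l) (?w l)) t i" using c by simp
        then show ?thesis using True by (simp add: smul_def eta_def)
      next
        case False
        then show ?thesis using c by auto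
      qed
      then show "c = ?c" by blast
    qed
  qed
  show "is_phi_matrix f a b 1 ?w ?A"
    unfolding is_phi_matrix_def
  proof (intro conjI allI impI)
    show "\<And>k l i. 1 \<le> k \<or> 1 \<le> l \<or> f \<le> i \<Longrightarrow> ?A k l i = 0" by auto
    show "\<And>i. i < f \<Longrightarrow> det (mat 1 1 (\<lambda>(k, l). ?A k l i)) \<noteq> 0" unfolding det1 using nz by simp
    fix l :: nat assume "l < 1"
    then show "phiD f a b (?w l) = (\<Sum>k<1. smul (?A k l) (?w k))"
      by (auto simp: phiD_eq smul_def eta_def fun_eq_iff)
  qed
qed

lemma tN_line:
  fixes a b :: "'a::field"
  assumes "1 \<le> f" and t: "t \<in> {1,2}" and "coord2 a b t \<noteq> 0"
  shows "tN v f e a b (line t f) = real e * v (coord2 a b t ^ f)"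
  using assms by (intro tN_determined line_has_basis line_det_product)

definition wronskian :: "(nat \<Rightarrow> 'a::comm_ring_1 vec2) \<Rightarrow> nat \<Rightarrow> 'a" where
  "wronskian w i = w 0 1 i * w 1 2 i - w 0 2 i * w 1 1 i"

lemma whole_free_basis_rank:
  assumes f1: "1 \<le> f" and B: "is_free_basis f (Dcar f) r (w :: nat \<Rightarrow> 'a::field vec2)"
  shows "r = 2"
proof -
  have wD: "w l \<in> Dcar f" if "l < r" for l :: nat using B that by (simp add: is_free_basis_def)
  have r0: "r \<noteq> 0"
  proof
    assume "r = 0"
    then have "eta 1 f = (0::'a vec2)" using free_basis_expand[OF B eta_Dcar[of 1 f]] by auto
    then have "eta 1 f 1 0 = (0::'a)" by simp
    then show False using f1 by (simp add: eta_def)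
  qed
  have r1: "r \<noteq> 1"
  proof
    assume r1: "r = 1"
    obtain c where c: "eta_at 1 0 = (\<Sum>l<r. smul (c l) (w l))"
      using free_basis_expand[OF B eta_at_Dcar[of 1 0 f]] f1 by auto
    obtain c' where c': "eta_at 2 0 = (\<Sum>l<r. smul (c' l) (w l))"
      using free_basis_expand[OF B eta_at_Dcar[of 2 0 f]] f1 by auto
    have e: "c 0 0 * w 0 1 0 = 1" "c 0 0 * w 0 2 0 = 0" "c' 0 0 * w 0 2 0 = 1"
      using fun_cong[OF fun_cong[OF c, of 1], of 0] fun_cong[OF fun_cong[OF c, of 2], of 0]
        fun_cong[OF fun_cong[OF c', of 2], of 0] r1
      by (simp_all add: sum_smul_apply eta_at_def smul_def)
    then have "w 0 2 0 = 0" by (metis mult_eq_0_iff zero_neq_one)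
    then show False using e(3) by simp
  qed
  have r3: "\<not> 3 \<le> r"
  proof
    assume r3: "3 \<le> r"
    obtain p q s where pqs: "(p, q, s) \<noteq> (0, 0, 0)"
      "p * w 0 1 0 + q * w 1 1 0 + s * w 2 1 0 = 0" "p * w 0 2 0 + q * w 1 2 0 + s * w 2 2 0 = 0"
      using three_vectors_dependent by blast
    define P where "P l = (if l = 0 then p else if l = 1 then q else if l = 2 then s else 0)"
      for l :: nat
    have "(\<Sum>l<r. P l * w l t 0) = 0" for t
    proof -
      have "(\<Sum>l<r. P l * w l t 0) = P 0 * w 0 t 0 + P 1 * w 1 t 0 + P 2 * w 2 t 0"
        using r3 by (subst sum_initial_segment[of 3]) (auto simp: P_def eval_nat_numeral)
      then show ?thesis using pqs Dcar_zero[OF wD] r3 by (cases "t \<in> {1,2}") (auto simp: P_def)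
    qed
    then have "P 0 = 0" "P 1 = 0" "P 2 = 0"
      using free_basis_indep_at[OF B zero_Dcar, of 0 P] f1 r3 by auto
    then show False using pqs by (simp add: P_def)
  qed
  show ?thesis using r0 r1 r3 by simp
qed

lemma whole_free_basis_wronskian:
  assumes f1: "1 \<le> f" and B: "is_free_basis f (Dcar f) r (w :: nat \<Rightarrow> 'a::field vec2)"
    and i: "i < f"
  shows "wronskian w i \<noteq> 0"
proof
  assume "wronskian w i = 0"
  then obtain p q where pq: "(p, q) \<noteq> (0, 0)" "p * w 0 1 i + q * w 1 1 i = 0"
    "p * w 0 2 i + q * w 1 2 i = 0"
    using two_vectors_dependent[of "w 0 1 i" "w 1 2 i" "w 0 2 i" "w 1 1 i"]
    by (auto simp: wronskian_def)
  have r2: "r = 2" by (rule whole_free_basis_rank[OF f1 B])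
  have wD: "w l \<in> Dcar f" if "l < r" for l :: nat using B that by (simp add: is_free_basis_def)
  define P where "P l = (if l = 0 then p else if l = 1 then q else 0)" for l :: nat
  have "(\<Sum>l<r. P l * w l t i) = 0" for t
    using pq Dcar_zero[OF wD] r2 by (cases "t \<in> {1,2}") (auto simp: P_def numeral_2_eq_2)
  then have "P 0 = 0" "P 1 = 0" using free_basis_indep_at[OF B zero_Dcar i, of P] r2 by auto
  then show False using pq by (simp add: P_def)
qed

text \<open>Since phi multiplies the eta_1- and eta_2-components by a and b, the Wronskian of phi(w)
  is ab times the shifted Wronskian of w; on the other hand it is det A times that of w.\<close>
lemma whole_det_product:
  fixes a b :: "'a::field"
  assumes f1: "1 \<le> f" and B: "is_free_basis f (Dcar f) r w" and P: "is_phi_matrix f a b r w A"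
  shows "(\<Prod>i<f. det (mat r r (\<lambda>(k, l). A k l i))) = (a * b) ^ f"
proof -
  have r2: "r = 2" by (rule whole_free_basis_rank[OF f1 B])
  have rel: "coord2 a b t * w l t ((i + 1) mod f) = A 0 l i * w 0 t i + A 1 l i * w 1 t i"
    if "l < 2" "i < f" for l t i
  proof -
    have "phiD f a b (w l) = (\<Sum>k<2. smul (A k l) (w k))"
      using P r2 that unfolding is_phi_matrix_def by auto
    then have "phiD f a b (w l) t i = (\<Sum>k<2. smul (A k l) (w k)) t i" by simp
    then show ?thesis using that(2) by (simp add: phiD_eq smul_def numeral_2_eq_2)
  qed
  have "det (mat 2 2 (\<lambda>(k, l). A k l i)) * wronskian w i = (a * b) * wronskian w ((i + 1) mod f)"
    if i: "i < f" for i
  proof -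
    let ?j = "(i + 1) mod f"
    have R: "a * w 0 1 ?j = A 0 0 i * w 0 1 i + A 1 0 i * w 1 1 i"
            "a * w 1 1 ?j = A 0 1 i * w 0 1 i + A 1 1 i * w 1 1 i"
            "b * w 0 2 ?j = A 0 0 i * w 0 2 i + A 1 0 i * w 1 2 i"
            "b * w 1 2 ?j = A 0 1 i * w 0 2 i + A 1 1 i * w 1 2 i"
      using rel[of 0 i 1] rel[of 1 i 1] rel[of 0 i 2] rel[of 1 i 2] i by simp_all
    have "(a * b) * wronskian w ?j = (a * w 0 1 ?j) * (b * w 1 2 ?j) - (b * w 0 2 ?j) * (a * w 1 1 ?j)"
      by (simp add: wronskian_def algebra_simps)
    also have "\<dots> = (A 0 0 i * w 0 1 i + A 1 0 i * w 1 1 i) * (A 0 1 i * w 0 2 i + A 1 1 i * w 1 2 i)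
        - (A 0 0 i * w 0 2 i + A 1 0 i * w 1 2 i) * (A 0 1 i * w 0 1 i + A 1 1 i * w 1 1 i)"
      by (simp only: R)
    also have "\<dots> = det (mat 2 2 (\<lambda>(k, l). A k l i)) * wronskian w i"
      by (simp add: det2 wronskian_def algebra_simps)
    finally show ?thesis by simp
  qed
  then have "(\<Prod>i<f. det (mat 2 2 (\<lambda>(k, l). A k l i))) = (a * b) ^ f"
    using whole_free_basis_wronskian[OF f1 B] by (intro cyclic_product) auto
  then show ?thesis using r2 by simp
qed

lemma whole_has_basis:
  fixes a b :: "'a::field"
  assumes a0: "a \<noteq> 0" and b0: "b \<noteq> 0"
  shows "\<exists>r w A. is_free_basis f (Dcar f) r w \<and> is_phi_matrix f a b r w A"
proof (intro exI conjI)
  let ?w = "\<lambda>l::nat. eta (l + 1) f :: 'a vec2"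
  let ?A = "\<lambda>(k::nat) (l::nat) (i::nat). if k = l \<and> k < 2 \<and> i < f then coord2 a b (k + 1) else 0"
  show "is_free_basis f (Dcar f) 2 ?w"
    unfolding is_free_basis_def
  proof (intro conjI ballI allI impI)
    show "\<And>l. l < 2 \<Longrightarrow> ?w l \<in> Dcar f" by (rule eta_Dcar) auto
    fix d :: "'a vec2" assume d: "d \<in> Dcar f"
    let ?c = "\<lambda>(l::nat) (i::nat). if l < 2 \<and> i < f then d (l + 1) i else 0"
    show "\<exists>!c. (\<forall>l i. (2 \<le> l \<or> f \<le> i) \<longrightarrow> c l i = 0) \<and> d = (\<Sum>l<2. smul (c l) (?w l))"
    proof (rule ex1I[of _ ?c])
      have "d = smul (d 1) (eta 1 f) + smul (d 2) (eta 2 f)" by (rule Dcar_decomp[OF d])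
      also have "\<dots> = (\<Sum>l<2. smul (?c l) (?w l))"
        using Dcar_zero[OF d] by (auto simp: smul_def eta_def fun_eq_iff numeral_2_eq_2)
      finally show "(\<forall>l i. (2 \<le> l \<or> f \<le> i) \<longrightarrow> ?c l i = 0) \<and> d = (\<Sum>l<2. smul (?c l) (?w l))"
        by auto
      fix c assume c: "(\<forall>l i. (2 \<le> l \<or> f \<le> i) \<longrightarrow> c l i = 0) \<and> d = (\<Sum>l<2. smul (c l) (?w l))"
      have "c l i = ?c l i" for l i
      proof (cases "l < 2 \<and> i < f")
        case True
        have "d (l + 1) i = (\<Sum>l<2. smul (c l) (?w l)) (l + 1) i" using c by simp
        then show ?thesis using True
          by (auto simp: smul_def eta_def numeral_2_eq_2 less_Suc_eq)
      next
        case False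
        then show ?thesis using c by auto
      qed
      then show "c = ?c" by blast
    qed
  qed
  show "is_phi_matrix f a b 2 ?w ?A"
    unfolding is_phi_matrix_def
  proof (intro conjI allI impI)
    show "\<And>k l i. 2 \<le> k \<or> 2 \<le> l \<or> f \<le> i \<Longrightarrow> ?A k l i = 0" by auto
    show "\<And>i. i < f \<Longrightarrow> det (mat 2 2 (\<lambda>(k, l). ?A k l i)) \<noteq> 0"
      unfolding det2 using a0 b0 by simp
    fix l :: nat assume "l < 2"
    then show "phiD f a b (?w l) = (\<Sum>k<2. smul (?A k l) (?w k))"
      by (auto simp: phiD_eq smul_def eta_def coord2_def fun_eq_iff numeral_2_eq_2 less_Suc_eq)
  qed
qed

lemma tN_whole:
  fixes a b :: "'a::field"
  assumes "1 \<le> f" and "a \<noteq> 0" and "b \<noteq> 0"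
  shows "tN v f e a b (Dcar f) = real e * v ((a * b) ^ f)"
  using assms by (intro tN_determined whole_has_basis whole_det_product)

section \<open>Hodge numbers\<close>

interpretation VS: vector_space "\<lambda>c (d::'a::field vec2) t u. c * d t u"
  by unfold_locales (auto simp: fun_eq_iff algebra_simps)

lemma Edim_VS: "Edim S = VS.dim S"
  by (simp add: Edim_def)

lemma Edim_zero: "Edim {0::'a::field vec2} = 0"
  unfolding Edim_VS by (rule VS.dim_unique[of "{}"]) (auto simp: VS.independent_empty)

definition span1 :: "'a::times vec2 \<Rightarrow> 'a vec2 set" where
  "span1 u = range (\<lambda>c t s. c * u t s)"

lemma Edim_span1:
  fixes u :: "'a::field vec2"
  assumes "u \<noteq> 0"
  shows "Edim (span1 u) = 1"
  unfolding Edim_VS span1_def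
proof (rule VS.dim_unique[of "{u}"])
  show "{u} \<subseteq> range (\<lambda>c t s. c * u t s)" by (auto intro: range_eqI[of _ _ 1])
  show "range (\<lambda>c t s. c * u t s) \<subseteq> VS.span {u}" by (simp add: VS.span_singleton)
  show "VS.independent {u}" using assms by (intro VS.independent_insertI) (auto simp: VS.independent_empty)
qed simp

definition fibre :: "nat \<Rightarrow> 'a::zero vec2 set" where
  "fibre s = {d. \<forall>t u. (t \<notin> {1,2} \<or> u \<noteq> s) \<longrightarrow> d t u = 0}"

lemma Edim_fibre: "Edim (fibre s :: 'a::field vec2 set) = 2"
  unfolding Edim_VS
proof (rule VS.dim_unique[of "{eta_at 1 s, eta_at 2 s}"])
  show "{eta_at 1 s, eta_at 2 s} \<subseteq> (fibre s :: 'a vec2 set)" by (auto simp: fibre_def eta_at_def)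
  show "fibre s \<subseteq> VS.span {eta_at 1 s, eta_at 2 s :: 'a vec2}"
  proof
    fix d :: "'a vec2" assume d: "d \<in> fibre s"
    have "d = (\<lambda>t u. d 1 s * eta_at 1 s t u) + (\<lambda>t u. d 2 s * eta_at 2 s t u)"
      using d by (auto simp: fibre_def eta_at_def fun_eq_iff)
    moreover have "(\<lambda>t u. d 1 s * eta_at 1 s t u) + (\<lambda>t u. d 2 s * eta_at 2 s t u)
        \<in> VS.span {eta_at 1 s, eta_at 2 s :: 'a vec2}"
      by (intro VS.span_add VS.span_scale VS.span_base) auto
    ultimately show "d \<in> VS.span {eta_at 1 s, eta_at 2 s}" by simp
  qed
  show "VS.independent {eta_at 1 s, eta_at 2 s :: 'a vec2}"
  proof (rule VS.independent_insertI)
    show "eta_at 1 s \<notin> VS.span {eta_at 2 s :: 'a vec2}"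
    proof
      assume "eta_at 1 s \<in> VS.span {eta_at 2 s :: 'a vec2}"
      then obtain c where "eta_at 1 s = (\<lambda>t u. c * (eta_at 2 s :: 'a vec2) t u)"
        by (auto simp: VS.span_singleton)
      then have "eta_at 1 s 1 s = c * (eta_at 2 s :: 'a vec2) 1 s" by metis
      then show False by (simp add: eta_at_def)
    qed
    show "VS.independent {eta_at 2 s :: 'a vec2}"
      by (intro VS.independent_insertI) (auto simp: eta_at_nonzero VS.independent_empty)
  qed
  have "eta_at 1 s \<noteq> (eta_at 2 s :: 'a vec2)" by (auto simp: eta_at_def fun_eq_iff)
  then show "card {eta_at 1 s, eta_at 2 s :: 'a vec2} = 2" by simp
qed

lemma Sum_any_step:
  fixes D :: "int \<Rightarrow> nat" and K :: int
  assumes K: "0 \<le> K" and D: "\<And>j. D j = (if j \<le> 0 then a else if j \<le> K then b else 0)"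
  shows "Sum_any (\<lambda>j::int. j * (int (D j) - int (D (j + 1)))) = K * int b"
proof -
  have "j * (int (D j) - int (D (j + 1))) = (if j = K then K * int b else 0)" for j
    using K by (cases "j < 0"; cases "j = 0"; cases "j < K"; cases "j = K") (auto simp: D)
  then have "(\<lambda>j::int. j * (int (D j) - int (D (j + 1)))) = (\<lambda>j. if j = K then K * int b else 0)"
    by blast
  then have "Sum_any (\<lambda>j::int. j * (int (D j) - int (D (j + 1))))
      = Sum_any (\<lambda>j. if j = K then K * int b else 0)" by (simp only:)
  also have "\<dots> = K * int b" using Sum_any.delta[of K "\<lambda>_. K * int b"] by simp
  finally show ?thesis .
qed

lemma tH_from_dims:
  fixes F :: "int \<Rightarrow> 'a::field vec2 set" and a b :: "nat \<Rightarrow> nat"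
  assumes k: "\<forall>s<m. 0 \<le> k s"
    and dims: "\<And>s j. s < m \<Longrightarrow>
      Edim (eproj s ` F j) = (if j \<le> 0 then a s else if j \<le> k s then b s else 0)"
  shows "tH m F = (\<Sum>s<m. k s * int (b s))"
  unfolding tH_def
  using Sum_any_step[of "k s" "\<lambda>j. Edim (eproj s ` F j)" "a s" "b s" for s] k dims
  by (intro sum.cong) auto

definition fil_vec :: "(nat \<Rightarrow> 'a) \<Rightarrow> (nat \<Rightarrow> 'a) \<Rightarrow> nat \<Rightarrow> 'a::zero vec2" where
  "fil_vec x y s = (\<lambda>t u. if u = s then coord2 (x s) (y s) t else 0)"

definition fil_elt :: "nat \<Rightarrow> (nat \<Rightarrow> int) \<Rightarrow> (nat \<Rightarrow> 'a) \<Rightarrow> (nat \<Rightarrow> 'a) \<Rightarrow> int \<Rightarrow> (nat \<Rightarrow> 'a)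
    \<Rightarrow> 'a::comm_ring_1 vec2" where
  "fil_elt m k x y j c = (\<lambda>t s. if s < m \<and> j \<le> k s then c s * coord2 (x s) (y s) t else 0)"

lemma Fil_pos: "0 < j \<Longrightarrow> Fil m k x y j = range (fil_elt m k x y j)"
  unfolding Fil_def fil_elt_def coord2_def by auto

lemma Fil_nonpos: "j \<le> 0 \<Longrightarrow> Fil m k x y j = Dcar m"
  by (simp add: Fil_def)

lemma fil_elt_Dcar: "fil_elt m k x y j c \<in> Dcar m"
  by (auto simp: Dcar_def fil_elt_def coord2_def)

lemma eproj_fil_elt:
  "eproj s (fil_elt m k x y j c) =
    (if s < m \<and> j \<le> k s then (\<lambda>t u. c s * fil_vec x y s t u) else 0)"
  by (auto simp: eproj_def fil_elt_def fil_vec_def fun_eq_iff)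

lemma fil_vec_nonzero: "x s \<noteq> 0 \<or> y s \<noteq> 0 \<Longrightarrow> fil_vec x y s \<noteq> (0::'a::zero vec2)"
  by (auto simp: fil_vec_def fun_eq_iff) (metis coord2_simps(1), metis coord2_simps(3))

lemma zero_Fil: "(0::'a::comm_ring_1 vec2) \<in> Fil m k x y j"
proof (cases "j \<le> 0")
  case True
  then show ?thesis by (simp add: Fil_nonpos zero_Dcar)
next
  case False
  have "fil_elt m k x y j (\<lambda>_. 0) = 0" by (simp add: fil_elt_def fun_eq_iff)
  then show ?thesis using False by (metis Fil_pos not_le rangeI)
qed

lemma eproj_whole: "s < m \<Longrightarrow> eproj s ` (Dcar m :: 'a::zero vec2 set) = fibre s"
proof -
  assume s: "s < m"
  have "d \<in> eproj s ` Dcar m" if "d \<in> fibre s" for d :: "'a vec2"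
  proof -
    have "d \<in> Dcar m" "eproj s d = d"
      using that s by (auto simp: fibre_def Dcar_def eproj_def fun_eq_iff)
    then show ?thesis by (metis image_eqI)
  qed
  then show ?thesis by (auto simp: eproj_def fibre_def Dcar_def)
qed

lemma eproj_line:
  "s < m \<Longrightarrow> t \<in> {1,2} \<Longrightarrow> eproj s ` (line t m :: 'a::comm_ring_1 vec2 set) = span1 (eta_at t s)"
proof -
  assume s: "s < m" and t: "t \<in> {1,2}"
  have "eproj s d = (\<lambda>t' u. d t s * eta_at t s t' u)" if "d \<in> line t m" for d :: "'a vec2"
    using line_other[OF that t] by (auto simp: eproj_def eta_at_def fun_eq_iff)
  moreover have "(\<lambda>t' u. c * eta_at t s t' u) \<in> eproj s ` (line t m :: 'a vec2 set)" for c :: 'a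
  proof -
    have "(\<lambda>t' u. c * (eta_at t s :: 'a vec2) t' u) \<in> line t m"
      using s t by (auto simp: line_def Dcar_def eta_at_def)
    moreover have "eproj s (\<lambda>t' u. c * (eta_at t s :: 'a vec2) t' u) = (\<lambda>t' u. c * eta_at t s t' u)"
      by (auto simp: eproj_def eta_at_def fun_eq_iff)
    ultimately show ?thesis by (metis image_eqI)
  qed
  ultimately show ?thesis unfolding span1_def by blast
qed

lemma graded_whole:
  assumes s: "s < m"
  shows "eproj s ` (Dcar m \<inter> Fil m k x y j) =
    (if j \<le> 0 then fibre s else if j \<le> k s then span1 (fil_vec x y s) else {0::'a::comm_ring_1 vec2})"
proof (cases "j \<le> 0")
  case True
  then show ?thesis using eproj_whole[OF s] by (simp add: Fil_nonpos)
next
  case False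
  then have Fj: "Dcar m \<inter> Fil m k x y j = range (fil_elt m k x y j)"
    using fil_elt_Dcar by (auto simp: Fil_pos)
  have "eproj s ` range (fil_elt m k x y j) = span1 (fil_vec x y s)" if "j \<le> k s"
  proof -
    have "(\<lambda>t u. c * fil_vec x y s t u) \<in> eproj s ` range (fil_elt m k x y j)" for c
    proof -
      have "(\<lambda>t u. c * fil_vec x y s t u) = eproj s (fil_elt m k x y j (\<lambda>_. c))"
        using s that by (simp add: eproj_fil_elt)
      then show ?thesis by blast
    qed
    then show ?thesis using s that by (auto simp: eproj_fil_elt span1_def)
  qed
  moreover have "eproj s ` range (fil_elt m k x y j) = {0}" if "\<not> j \<le> k s"
    using that by (auto simp: eproj_fil_elt image_iff)
  ultimately show ?thesis using False Fj by simp
qed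

lemma graded_zero: "eproj s ` ({0} \<inter> Fil m k x y j) = {0::'a::comm_ring_1 vec2}"
  using zero_Fil[of m k x y j] by (auto simp: eproj_def fun_eq_iff)

lemma fil_elt_in_line:
  fixes c :: "nat \<Rightarrow> 'a::idom"
  assumes t: "t \<in> {1,2}"
  shows "fil_elt m k x y j c \<in> line t m \<longleftrightarrow>
    (\<forall>s. s < m \<and> j \<le> k s \<and> coord2 (x s) (y s) (3 - t) \<noteq> 0 \<longrightarrow> c s = 0)"
  using fil_elt_Dcar[of m k x y j c] by (auto simp: line_def fil_elt_def)

lemma graded_line_pos:
  assumes s: "s < m" and t: "t \<in> {1,2}" and j: "0 < j"
  shows "eproj s ` (line t m \<inter> Fil m k x y j) =
    (if j \<le> k s \<and> coord2 (x s) (y s) (3 - t) = 0 then span1 (fil_vec x y s)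
     else {0::'a::field vec2})"
proof -
  have LF: "line t m \<inter> Fil m k x y j = {fil_elt m k x y j c | c. fil_elt m k x y j c \<in> line t m}"
    using j by (auto simp: Fil_pos)
  show ?thesis
  proof (cases "j \<le> k s \<and> coord2 (x s) (y s) (3 - t) = 0")
    case True
    have "(\<lambda>t u. c0 * fil_vec x y s t u) \<in> eproj s ` (line t m \<inter> Fil m k x y j)" for c0
    proof -
      define c where "c s' = (if s' = s then c0 else 0)" for s'
      have "fil_elt m k x y j c \<in> line t m" using True by (auto simp: fil_elt_in_line[OF t] c_def)
      moreover have "eproj s (fil_elt m k x y j c) = (\<lambda>t u. c0 * fil_vec x y s t u)"
        using s True by (simp add: eproj_fil_elt c_def)
      ultimately show ?thesis unfolding LF by force
    qed
    then show ?thesis using s True unfolding LF by (auto simp: eproj_fil_elt span1_def)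
  next
    case False
    have "eproj s (fil_elt m k x y j c) = 0" if "fil_elt m k x y j c \<in> line t m" for c
      using that False s by (auto simp: fil_elt_in_line[OF t] eproj_fil_elt fun_eq_iff)
    then have "eproj s ` (line t m \<inter> Fil m k x y j) \<subseteq> {0}" unfolding LF by blast
    moreover have "(0::'a vec2) \<in> eproj s ` (line t m \<inter> Fil m k x y j)"
    proof -
      have "eproj s 0 = (0::'a vec2)" by (simp add: eproj_def fun_eq_iff)
      then show ?thesis using zero_line zero_Fil by (metis IntI image_eqI)
    qed
    ultimately show ?thesis using False by auto
  qed
qed

lemma graded_line:
  assumes s: "s < m" and t: "t \<in> {1,2}"
  shows "eproj s ` (line t m \<inter> Fil m k x y j) =
    (if j \<le> 0 then span1 (eta_at t s)
     else if j \<le> k s \<and> coord2 (x s) (y s) (3 - t) = 0 then span1 (fil_vec x y s)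
     else {0::'a::field vec2})"
proof (cases "j \<le> 0")
  case True
  then have "line t m \<inter> Fil m k x y j = line t m" by (auto simp: Fil_nonpos line_def)
  then show ?thesis using True eproj_line[OF s t] by simp
next
  case False
  then have "0 < j" by simp
  then show ?thesis unfolding graded_line_pos[OF s t \<open>0 < j\<close>] using False by simp
qed

lemma baseL_eqI:
  assumes "submod m N" "bc f m ` M \<subseteq> N" "\<And>N'. submod m N' \<Longrightarrow> bc f m ` M \<subseteq> N' \<Longrightarrow> N \<subseteq> N'"
  shows "baseL f m M = N"
  unfolding baseL_def using assms by blast

lemma bc_eta: "1 \<le> f \<Longrightarrow> bc f m (eta t f) = eta t m"
  by (auto simp: bc_def eta_def fun_eq_iff)

lemma baseL_zero: "baseL f m {0::'a::comm_ring_1 vec2} = {0}"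
  by (rule baseL_eqI) (auto simp: submod_zero submod_0 bc_def fun_eq_iff)

lemma baseL_line:
  assumes f1: "1 \<le> f" and t: "t \<in> {1,2}"
  shows "baseL f m (line t f) = (line t m :: 'a::comm_ring_1 vec2 set)"
proof (rule baseL_eqI)
  show "submod m (line t m :: 'a vec2 set)" using t by (rule submod_line)
  show "bc f m ` line t f \<subseteq> (line t m :: 'a vec2 set)" by (auto simp: line_def Dcar_def bc_def)
  fix N' :: "'a vec2 set" assume sm: "submod m N'" and sub: "bc f m ` line t f \<subseteq> N'"
  have "eta t m \<in> N'" using sub eta_line[OF t] bc_eta[OF f1] by (metis image_subset_iff)
  then show "line t m \<subseteq> N'" by (rule line_subset_submod[OF sm t])
qed

lemma baseL_whole:
  assumes f1: "1 \<le> f"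
  shows "baseL f m (Dcar f) = (Dcar m :: 'a::comm_ring_1 vec2 set)"
proof (rule baseL_eqI)
  show "submod m (Dcar m :: 'a vec2 set)" by (rule submod_whole)
  show "bc f m ` Dcar f \<subseteq> (Dcar m :: 'a vec2 set)" by (auto simp: Dcar_def bc_def)
  fix N' :: "'a vec2 set" assume sm: "submod m N'" and sub: "bc f m ` Dcar f \<subseteq> N'"
  have "eta t m \<in> N'" if "t \<in> {1,2}" for t
    using sub eta_Dcar[OF that] bc_eta[OF f1] by (metis image_subset_iff)
  then show "Dcar m \<subseteq> N'" by (intro Dcar_subset_submod[OF sm]) auto
qed

lemma tH_zero:
  fixes x y :: "nat \<Rightarrow> 'a::field"
  assumes k: "\<forall>i<e * f. 0 \<le> k i"
  shows "tH_sub f e k x y {0} = 0"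
proof -
  have "tH (e * f) (\<lambda>j. {0} \<inter> Fil (e * f) k x y j) = (\<Sum>s<e * f. k s * int 0)"
    by (rule tH_from_dims[where a = "\<lambda>_. 0", OF k]) (simp add: graded_zero Edim_zero)
  then show ?thesis unfolding tH_sub_def by (simp add: baseL_zero)
qed

lemma tH_line:
  fixes x y :: "nat \<Rightarrow> 'a::field"
  assumes f1: "1 \<le> f" and t: "t \<in> {1,2}" and k: "\<forall>i<e * f. 0 \<le> k i"
    and xy: "\<forall>i<e * f. x i \<noteq> 0 \<or> y i \<noteq> 0"
  shows "tH_sub f e k x y (line t f) = (\<Sum>i\<in>{i. i < e * f \<and> coord2 (x i) (y i) (3 - t) = 0}. k i)"
proof -
  let ?b = "\<lambda>s. if coord2 (x s) (y s) (3 - t) = 0 then 1 else 0"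
  have "tH (e * f) (\<lambda>j. line t (e * f) \<inter> Fil (e * f) k x y j) = (\<Sum>s<e * f. k s * int (?b s))"
  proof (rule tH_from_dims[where a = "\<lambda>_. 1", OF k])
    fix s j assume s: "s < e * f"
    then have "fil_vec x y s \<noteq> 0" using xy by (intro fil_vec_nonzero) auto
    then show "Edim (eproj s ` (line t (e * f) \<inter> Fil (e * f) k x y j)) =
      (if j \<le> 0 then 1 else if j \<le> k s then ?b s else 0)"
      unfolding graded_line[OF s t] by (simp add: Edim_span1 eta_at_nonzero Edim_zero)
  qed
  also have "\<dots> = (\<Sum>s<e * f. if coord2 (x s) (y s) (3 - t) = 0 then k s else 0)"
    by (intro sum.cong) auto
  also have "\<dots> = (\<Sum>i\<in>{i. i < e * f \<and> coord2 (x i) (y i) (3 - t) = 0}. k i)"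
    by (simp add: sum.inter_filter[symmetric] lessThan_def conj_commute)
  finally show ?thesis unfolding tH_sub_def by (simp add: baseL_line[OF f1 t])
qed

lemma tH_whole:
  fixes x y :: "nat \<Rightarrow> 'a::field"
  assumes f1: "1 \<le> f" and k: "\<forall>i<e * f. 0 \<le> k i" and xy: "\<forall>i<e * f. x i \<noteq> 0 \<or> y i \<noteq> 0"
  shows "tH_sub f e k x y (Dcar f) = (\<Sum>i<e * f. k i)"
proof -
  have "tH (e * f) (\<lambda>j. Dcar (e * f) \<inter> Fil (e * f) k x y j) = (\<Sum>s<e * f. k s * int 1)"
  proof (rule tH_from_dims[where a = "\<lambda>_. 2", OF k])
    fix s j assume s: "s < e * f"
    then have "fil_vec x y s \<noteq> 0" using xy by (intro fil_vec_nonzero) auto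
    then show "Edim (eproj s ` (Dcar (e * f) \<inter> Fil (e * f) k x y j)) =
      (if j \<le> 0 then 2 else if j \<le> k s then 1 else 0)"
      unfolding graded_whole[OF s] by (simp add: Edim_span1 Edim_fibre Edim_zero)
  qed
  then show ?thesis unfolding tH_sub_def by (simp add: baseL_whole[OF f1])
qed

section \<open>Weak admissibility and the weakly admissible sub-objects\<close>

lemma weight_split:
  fixes k :: "nat \<Rightarrow> int"
  assumes "\<forall>i<m. x i \<noteq> 0 \<or> y i \<noteq> 0"
  shows "(\<Sum>i<m. k i) = (\<Sum>i\<in>{i. i < m \<and> y i = 0}. k i) + (\<Sum>i\<in>{i. i < m \<and> x i = 0}. k i)
      + (\<Sum>i\<in>{i. i < m \<and> x i \<noteq> 0 \<and> y i \<noteq> 0}. k i)"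
proof -
  have "(\<Sum>i<m. k i) = (\<Sum>i<m. (if y i = 0 then k i else 0) + (if x i = 0 then k i else 0)
      + (if x i \<noteq> 0 \<and> y i \<noteq> 0 then k i else 0))"
    using assms by (intro sum.cong) auto
  then show ?thesis by (simp add: sum.distrib sum.inter_filter[symmetric] lessThan_def)
qed

lemma weight_sum_zero_iff:
  fixes k :: "nat \<Rightarrow> int"
  assumes "\<forall>i<m. 0 \<le> k i"
  shows "(\<Sum>i\<in>{i. i < m \<and> P i}. k i) = 0 \<longleftrightarrow> \<not> (\<exists>i<m. 0 < k i \<and> P i)"
  using assms by (subst sum_nonneg_eq_0_iff) (auto simp: less_le)

lemma ex1_of_two:
  assumes "D1 \<noteq> D2" and P: "\<And>M. P M \<longleftrightarrow> (M = D1 \<and> c1) \<or> (M = D2 \<and> c2)"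
  shows "(\<exists>!M. P M) \<longleftrightarrow> c1 \<noteq> c2"
  using assms by (cases c1; cases c2) auto

text \<open>The numbers nD1, nD2 are t_N of D_1, D_2 and hD1, hD2 are their t_H.\<close>
locale Fss_module =
  fixes v :: "'e::field \<Rightarrow> real" and f e :: nat and \<alpha> \<delta> :: 'e
    and k :: "nat \<Rightarrow> int" and x y :: "nat \<Rightarrow> 'e"
    and G :: "'g set" and act :: "'g \<Rightarrow> 'e vec2 \<Rightarrow> 'e vec2"
  assumes f_pos: "1 \<le> f"
    and v_mult: "\<And>a b. a \<noteq> 0 \<Longrightarrow> b \<noteq> 0 \<Longrightarrow> v (a * b) = v a + v b"
    and \<alpha>_nz: "\<alpha> \<noteq> 0" and \<delta>_nz: "\<delta> \<noteq> 0" and non_scalar: "\<alpha> ^ f \<noteq> \<delta> ^ f"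
    and k_nonneg: "\<forall>i<e * f. 0 \<le> k i"
    and xy_nz: "\<forall>i<e * f. x i \<noteq> 0 \<or> y i \<noteq> 0"
    and G_lines: "\<forall>g\<in>G. act g ` line 1 f \<subseteq> line 1 f \<and> act g ` line 2 f \<subseteq> line 2 f"
begin

abbreviation "nD1 \<equiv> real e * real f * v \<alpha>"
abbreviation "nD2 \<equiv> real e * real f * v \<delta>"
abbreviation "hD1 \<equiv> (of_int (\<Sum>i\<in>{i. i < e * f \<and> y i = 0}. k i) :: real)"
abbreviation "hD2 \<equiv> (of_int (\<Sum>i\<in>{i. i < e * f \<and> x i = 0}. k i) :: real)"
abbreviation "hD \<equiv> (of_int (\<Sum>i<e * f. k i) :: real)"

lemma valuation_power: "a \<noteq> 0 \<Longrightarrow> v (a ^ n) = real n * v a"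
proof (induction n)
  case 0
  have "v 1 = v 1 + v 1" using v_mult[of 1 1] by simp
  then show ?case by simp
next
  case (Suc n)
  then show ?case using v_mult[of a "a ^ n"] by (simp add: algebra_simps)
qed

lemma invariants:
  shows "tN v f e \<alpha> \<delta> {0} = 0" and "tH_sub f e k x y {0} = 0"
    and "tN v f e \<alpha> \<delta> (line 1 f) = nD1" and "of_int (tH_sub f e k x y (line 1 f)) = hD1"
    and "tN v f e \<alpha> \<delta> (line 2 f) = nD2" and "of_int (tH_sub f e k x y (line 2 f)) = hD2"
    and "tN v f e \<alpha> \<delta> (Dcar f) = nD1 + nD2" and "of_int (tH_sub f e k x y (Dcar f)) = hD"
proof -
  note vpow = valuation_power
  have "v 1 = 0" using vpow[of 1 0] by simp
  then show "tN v f e \<alpha> \<delta> {0} = 0" by (simp add: tN_zero[OF f_pos])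
  show "tH_sub f e k x y {0} = 0" by (rule tH_zero[OF k_nonneg])
  have "tN v f e \<alpha> \<delta> (line 1 f) = real e * v (coord2 \<alpha> \<delta> 1 ^ f)"
    by (rule tN_line[OF f_pos]) (simp_all add: \<alpha>_nz)
  then show "tN v f e \<alpha> \<delta> (line 1 f) = nD1" using vpow[OF \<alpha>_nz] by simp
  show "of_int (tH_sub f e k x y (line 1 f)) = hD1"
    using tH_line[OF f_pos _ k_nonneg xy_nz, of 1] by simp
  have "tN v f e \<alpha> \<delta> (line 2 f) = real e * v (coord2 \<alpha> \<delta> 2 ^ f)"
    by (rule tN_line[OF f_pos]) (simp_all add: \<delta>_nz)
  then show "tN v f e \<alpha> \<delta> (line 2 f) = nD2" using vpow[OF \<delta>_nz] by simp
  show "of_int (tH_sub f e k x y (line 2 f)) = hD2"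
    using tH_line[OF f_pos _ k_nonneg xy_nz, of 2] by simp
  show "tN v f e \<alpha> \<delta> (Dcar f) = nD1 + nD2"
    using tN_whole[OF f_pos \<alpha>_nz \<delta>_nz] vpow[of "\<alpha> * \<delta>"] v_mult[OF \<alpha>_nz \<delta>_nz] \<alpha>_nz \<delta>_nz
    by (simp add: algebra_simps)
  show "of_int (tH_sub f e k x y (Dcar f)) = hD"
    using tH_whole[OF f_pos k_nonneg xy_nz] by simp
qed

lemma lines_distinct: "line 1 f \<noteq> (line 2 f :: 'e vec2 set)" "line 1 f \<noteq> (Dcar f :: 'e vec2 set)"
    "line 2 f \<noteq> (Dcar f :: 'e vec2 set)"
  and lines_nonzero: "line 1 f \<noteq> {0::'e vec2}" "line 2 f \<noteq> {0::'e vec2}"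
proof -
  have f0: "0 < f" using f_pos by simp
  note out = eta_notin_line[OF f0, where 'a = 'e] and nz = eta_nonzero[OF f0, where 'a = 'e]
  have "(eta 1 f :: 'e vec2) \<in> line 1 f" "(eta 2 f :: 'e vec2) \<in> line 2 f"
    "(eta 1 f :: 'e vec2) \<in> Dcar f" "(eta 2 f :: 'e vec2) \<in> Dcar f"
    by (simp_all add: eta_line eta_Dcar)
  then show "line 1 f \<noteq> (line 2 f :: 'e vec2 set)" "line 1 f \<noteq> (Dcar f :: 'e vec2 set)"
      "line 2 f \<noteq> (Dcar f :: 'e vec2 set)"
    using out by blast+
  show "line 1 f \<noteq> {0::'e vec2}" "line 2 f \<noteq> {0::'e vec2}"
    using nz[of 1] nz[of 2] \<open>(eta 1 f :: 'e vec2) \<in> line 1 f\<close> \<open>(eta 2 f :: 'e vec2) \<in> line 2 f\<close> by blast+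
qed

lemma stable_iff:
  "submod f M \<and> phiD f \<alpha> \<delta> ` M \<subseteq> M \<longleftrightarrow> M \<in> {{0}, line 1 f, line 2 f, Dcar f}"
  using stable_submodules[OF _ _ \<alpha>_nz \<delta>_nz non_scalar, of M]
    submod_zero submod_line[of 1 f] submod_line[of 2 f] submod_whole[of f]
    phiD_zero[of f \<alpha> \<delta>] phiD_line[of f \<alpha> \<delta> 1] phiD_line[of f \<alpha> \<delta> 2]
    phiD_whole[of f \<alpha> \<delta>]
  by auto

text \<open>Weak admissibility reduces to the conditions (i)-(iii): the only phi-stable proper
  submodules to test are the two lines.\<close>
lemma weakly_admissible_iff:
  "weakly_admissible v f e \<alpha> \<delta> k x y \<longleftrightarrow> nD1 + nD2 = hD \<and> hD1 \<le> nD1 \<and> hD2 \<le> nD2"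
proof -
  have "(\<forall>M. submod f M \<and> phiD f \<alpha> \<delta> ` M \<subseteq> M \<longrightarrow>
      real_of_int (tH_sub f e k x y M) \<le> tN v f e \<alpha> \<delta> M) \<longleftrightarrow>
    (\<forall>M\<in>{{0}, line 1 f, line 2 f, Dcar f}. real_of_int (tH_sub f e k x y M) \<le> tN v f e \<alpha> \<delta> M)"
    unfolding stable_iff by blast
  also have "\<dots> \<longleftrightarrow> real_of_int (tH_sub f e k x y {0}) \<le> tN v f e \<alpha> \<delta> {0}
      \<and> real_of_int (tH_sub f e k x y (line 1 f)) \<le> tN v f e \<alpha> \<delta> (line 1 f)
      \<and> real_of_int (tH_sub f e k x y (line 2 f)) \<le> tN v f e \<alpha> \<delta> (line 2 f)
      \<and> real_of_int (tH_sub f e k x y (Dcar f)) \<le> tN v f e \<alpha> \<delta> (Dcar f)"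
    by blast
  finally have "(\<forall>M. submod f M \<and> phiD f \<alpha> \<delta> ` M \<subseteq> M \<longrightarrow>
      real_of_int (tH_sub f e k x y M) \<le> tN v f e \<alpha> \<delta> M) \<longleftrightarrow>
      0 \<le> (0::real) \<and> hD1 \<le> nD1 \<and> hD2 \<le> nD2 \<and> hD \<le> nD1 + nD2"
    unfolding invariants by (simp only: of_int_0)
  then show ?thesis unfolding weakly_admissible_def invariants by argo
qed

lemma proper_subobject_iff:
  "(wa_subobject v f e \<alpha> \<delta> k x y G act M \<and> M \<noteq> Dcar f) \<longleftrightarrow>
    (M = line 1 f \<and> hD1 = nD1) \<or> (M = line 2 f \<and> hD2 = nD2)"
proof -
  have "(wa_subobject v f e \<alpha> \<delta> k x y G act M \<and> M \<noteq> Dcar f) \<longleftrightarrow>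
    (M = line 1 f \<or> M = line 2 f) \<and> real_of_int (tH_sub f e k x y M) = tN v f e \<alpha> \<delta> M"
  proof
    assume "wa_subobject v f e \<alpha> \<delta> k x y G act M \<and> M \<noteq> Dcar f"
    then have "M \<in> {{0}, line 1 f, line 2 f, Dcar f}" "M \<noteq> {0}" "M \<noteq> Dcar f"
      and "real_of_int (tH_sub f e k x y M) = tN v f e \<alpha> \<delta> M"
      unfolding wa_subobject_def stable_iff[symmetric] by auto
    then show "(M = line 1 f \<or> M = line 2 f) \<and>
        real_of_int (tH_sub f e k x y M) = tN v f e \<alpha> \<delta> M" by blast
  next
    assume M: "(M = line 1 f \<or> M = line 2 f) \<and>
        real_of_int (tH_sub f e k x y M) = tN v f e \<alpha> \<delta> M"
    then have "submod f M \<and> phiD f \<alpha> \<delta> ` M \<subseteq> M" unfolding stable_iff by auto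
    moreover have "\<forall>g\<in>G. act g ` M \<subseteq> M" using M G_lines by blast
    moreover have "M \<noteq> {0}" "M \<noteq> Dcar f" using M lines_distinct lines_nonzero by blast+
    ultimately show "wa_subobject v f e \<alpha> \<delta> k x y G act M \<and> M \<noteq> Dcar f"
      unfolding wa_subobject_def using M by simp
  qed
  also have "\<dots> \<longleftrightarrow>
      (M = line 1 f \<and> real_of_int (tH_sub f e k x y (line 1 f)) = tN v f e \<alpha> \<delta> (line 1 f)) \<or>
      (M = line 2 f \<and> real_of_int (tH_sub f e k x y (line 2 f)) = tN v f e \<alpha> \<delta> (line 2 f))"
    by blast
  also have "\<dots> \<longleftrightarrow> (M = line 1 f \<and> hD1 = nD1) \<or> (M = line 2 f \<and> hD2 = nD2)"
    unfolding invariants ..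
  finally show ?thesis .
qed

lemma line_subobject_iff:
  "wa_subobject v f e \<alpha> \<delta> k x y G act (line 1 f) \<longleftrightarrow> hD1 = nD1"
  "wa_subobject v f e \<alpha> \<delta> k x y G act (line 2 f) \<longleftrightarrow> hD2 = nD2"
  using proper_subobject_iff[of "line 1 f"] proper_subobject_iff[of "line 2 f"] lines_distinct
  by auto

text \<open>For weakly admissible D, (ii) and (iii) are inequalities, so "not an equality" means
  "strict": D is irreducible iff both are strict, and has a unique proper sub-object iff
  exactly one is strict.\<close>
lemma irreducible_iff:
  assumes "weakly_admissible v f e \<alpha> \<delta> k x y"
  shows "irreducible_wa v f e \<alpha> \<delta> k x y G act \<longleftrightarrow> hD1 < nD1 \<and> hD2 < nD2"
proof -
  have "(\<exists>M. wa_subobject v f e \<alpha> \<delta> k x y G act M \<and> M \<noteq> Dcar f) \<longleftrightarrow> hD1 = nD1 \<or> hD2 = nD2"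
    unfolding proper_subobject_iff by blast
  then show ?thesis using assms unfolding irreducible_wa_def weakly_admissible_iff by auto
qed

lemma unique_proper_subobject_iff:
  assumes "weakly_admissible v f e \<alpha> \<delta> k x y"
  shows "(\<exists>!M. wa_subobject v f e \<alpha> \<delta> k x y G act M \<and> M \<noteq> Dcar f) \<longleftrightarrow>
    (hD1 < nD1) \<noteq> (hD2 < nD2)"
proof -
  have "(\<exists>!M. wa_subobject v f e \<alpha> \<delta> k x y G act M \<and> M \<noteq> Dcar f) \<longleftrightarrow>
      (hD1 = nD1) \<noteq> (hD2 = nD2)"
    by (rule ex1_of_two[OF lines_distinct(1) proper_subobject_iff])
  then show ?thesis using assms unfolding weakly_admissible_iff by auto
qed

lemma only_proper_subobject:
  assumes "weakly_admissible v f e \<alpha> \<delta> k x y"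
  shows "hD1 < nD1 \<and> \<not> hD2 < nD2 \<Longrightarrow>
      (wa_subobject v f e \<alpha> \<delta> k x y G act M \<and> M \<noteq> Dcar f) \<longleftrightarrow> M = line 2 f"
    and "hD2 < nD2 \<and> \<not> hD1 < nD1 \<Longrightarrow>
      (wa_subobject v f e \<alpha> \<delta> k x y G act M \<and> M \<noteq> Dcar f) \<longleftrightarrow> M = line 1 f"
  using assms lines_distinct(1) unfolding proper_subobject_iff weakly_admissible_iff by auto

text \<open>Both lines are sub-objects iff (ii) and (iii) are equalities; by (i) and the splitting of
  the weights this means that the weights k_i with x_i, y_i both nonzero all vanish.\<close>
lemma split_iff:
  assumes "weakly_admissible v f e \<alpha> \<delta> k x y"
  shows "wa_subobject v f e \<alpha> \<delta> k x y G act (line 1 f) \<and> wa_subobject v f e \<alpha> \<delta> k x y G act (line 2 f)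
    \<longleftrightarrow> \<not> (\<exists>i<e * f. 0 < k i \<and> x i \<noteq> 0 \<and> y i \<noteq> 0)"
proof -
  define hB where "hB = (\<Sum>i\<in>{i. i < e * f \<and> x i \<noteq> 0 \<and> y i \<noteq> 0}. k i)"
  have "hD = hD1 + hD2 + of_int hB"
    unfolding hB_def weight_split[OF xy_nz] by simp
  moreover have "0 \<le> hB" unfolding hB_def using k_nonneg by (intro sum_nonneg) auto
  moreover have "hB = 0 \<longleftrightarrow> \<not> (\<exists>i<e * f. 0 < k i \<and> x i \<noteq> 0 \<and> y i \<noteq> 0)"
    unfolding hB_def by (rule weight_sum_zero_iff[OF k_nonneg])
  ultimately show ?thesis
    using assms unfolding line_subobject_iff weakly_admissible_iff by auto
qed

end

text \<open>After rewriting v(alpha delta) = v(alpha) + v(delta), each conjunct is one of the lemmas of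
  the locale Fss_module, whose hypotheses are among those of the theorem.\<close>

theorem mainTheorem10:
  fixes v :: "'e::field_char_0 \<Rightarrow> real" and f e :: nat and \<alpha> \<delta> :: 'e
    and k :: "nat \<Rightarrow> int" and x y :: "nat \<Rightarrow> 'e"
    and G :: "'g set" and act :: "'g \<Rightarrow> 'e vec2 \<Rightarrow> 'e vec2"
  assumes "1 \<le> f" and "1 \<le> e"
    and v_mult: "\<forall>a b. a \<noteq> 0 \<longrightarrow> b \<noteq> 0 \<longrightarrow> v (a * b) = v a + v b"
    and v_ultra: "\<forall>a b. a \<noteq> 0 \<longrightarrow> b \<noteq> 0 \<longrightarrow> a + b \<noteq> 0 \<longrightarrow> min (v a) (v b) \<le> v (a + b)"
    and "\<alpha> \<noteq> 0" and "\<delta> \<noteq> 0" and "\<alpha> ^ f \<noteq> \<delta> ^ f"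
    and "\<forall>i<e * f. 0 \<le> k i"
    and "\<forall>i<e * f. x i \<noteq> 0 \<or> y i \<noteq> 0"
    and G_diag: "\<forall>g\<in>G. act g ` Dline1 f \<subseteq> Dline1 f \<and> act g ` Dline2 f \<subseteq> Dline2 f"
    and G_add: "\<forall>g\<in>G. \<forall>a\<in>Dcar f. \<forall>b\<in>Dcar f. act g (a + b) = act g a + act g b"
    and G_phi: "\<forall>g\<in>G. \<forall>a\<in>Dcar f. act g (phiD f \<alpha> \<delta> a) = phiD f \<alpha> \<delta> (act g a)"
  shows
   "(weakly_admissible v f e \<alpha> \<delta> k x y \<longleftrightarrow>
       real e * real f * v (\<alpha> * \<delta>) = of_int (\<Sum>i<e * f. k i) \<and>
       real e * real f * v \<alpha> \<ge> of_int (\<Sum>i\<in>{i. i < e * f \<and> y i = 0}. k i) \<and>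
       real e * real f * v \<delta> \<ge> of_int (\<Sum>i\<in>{i. i < e * f \<and> x i = 0}. k i))
    \<and>
    (weakly_admissible v f e \<alpha> \<delta> k x y \<longrightarrow>
      (irreducible_wa v f e \<alpha> \<delta> k x y G act \<longleftrightarrow>
         real e * real f * v \<alpha> > of_int (\<Sum>i\<in>{i. i < e * f \<and> y i = 0}. k i) \<and>
         real e * real f * v \<delta> > of_int (\<Sum>i\<in>{i. i < e * f \<and> x i = 0}. k i))
      \<and>
      ((\<exists>!M. wa_subobject v f e \<alpha> \<delta> k x y G act M \<and> M \<noteq> Dcar f) \<longleftrightarrow>
         (real e * real f * v \<alpha> > of_int (\<Sum>i\<in>{i. i < e * f \<and> y i = 0}. k i)) \<noteq>
         (real e * real f * v \<delta> > of_int (\<Sum>i\<in>{i. i < e * f \<and> x i = 0}. k i)))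
      \<and>
      (real e * real f * v \<alpha> > of_int (\<Sum>i\<in>{i. i < e * f \<and> y i = 0}. k i) \<and>
       \<not> real e * real f * v \<delta> > of_int (\<Sum>i\<in>{i. i < e * f \<and> x i = 0}. k i) \<longrightarrow>
         (\<forall>M. (wa_subobject v f e \<alpha> \<delta> k x y G act M \<and> M \<noteq> Dcar f) \<longleftrightarrow> M = Dline2 f))
      \<and>
      (real e * real f * v \<delta> > of_int (\<Sum>i\<in>{i. i < e * f \<and> x i = 0}. k i) \<and>
       \<not> real e * real f * v \<alpha> > of_int (\<Sum>i\<in>{i. i < e * f \<and> y i = 0}. k i) \<longrightarrow>
         (\<forall>M. (wa_subobject v f e \<alpha> \<delta> k x y G act M \<and> M \<noteq> Dcar f) \<longleftrightarrow> M = Dline1 f))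
      \<and>
      (wa_subobject v f e \<alpha> \<delta> k x y G act (Dline1 f) \<and> wa_subobject v f e \<alpha> \<delta> k x y G act (Dline2 f)
         \<longleftrightarrow> \<not> (\<exists>i<e * f. 0 < k i \<and> x i \<noteq> 0 \<and> y i \<noteq> 0)))"
proof -
  interpret Fss_module v f e \<alpha> \<delta> k x y G act
    using assms by unfold_locales (auto simp: Dline1_eq Dline2_eq)
  have vab: "real e * real f * v (\<alpha> * \<delta>) = nD1 + nD2"
    using v_mult \<alpha>_nz \<delta>_nz by (simp add: algebra_simps)
  show ?thesis
    unfolding vab Dline1_eq Dline2_eq
    by (intro conjI impI allI weakly_admissible_iff irreducible_iff unique_proper_subobject_iff
        only_proper_subobject split_iff) blast+
qed

end
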